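(* For every $k\ge1$ and every tuple of partitions $\nu=(\nu_1^+,\nu_1^-,\dots,\nu_k^+,\nu_k^-)$, $$m^\infty_\nu(q,k)=\sum_{T\in D(\nu)}q^{\sum_{i=1}^k|\lambda_i(T)|}.$$
   Context: Identify a partition $\lambda=(a_1\ge a_2\ge\cdots)$ with $\sum_ja_j\epsilon_j$ in $\Lambda=\bigoplus_{j\ge1}\mathbb Z\epsilon_j$; put $\omega_i=\epsilon_1+\dots+\epsilon_i$; partitions are exactly elements with all $\omega$-coordinates $\ge0$. For $x,y\in\Lambda$, $y\le x$ means $x-y$ has all $\omega$-coordinates $\ge0$. $\mathcal P$ = partitions, $\mathcal P^k$ = $k$-tuples; $|\lambda|$ = number of boxes. $SST(\nu)$ = semistandard tableaux of shape $\nu$ with entries in $\mathbb Z_{>0}$, with the standard $\mathfrak{gl}_\infty$-crystal structure. For $T\in SST(\nu)$: $\mathrm{wt}(T)=\sum_j(\#\text{entries }j)\epsilon_j$, $\varepsilon_i(T)=\max\{m\ge0:\tilde e_i^mT\ne0\}$, $\varepsilon(T)=\sum_i\varepsilon_i(T)\omega_i$. $\mathrm{CLR}^\lambda_{\alpha,\nu}=\{T\in SST(\nu):\varepsilon(T)\le\alpha,\ \alpha+\mathrm{wt}(T)=\lambda\}$; it is known that $|\mathrm{CLR}^\lambda_{\alpha,\nu}|=c^\lambda_{\alpha,\nu}$ (Littlewood–Richardson coefficient). Indices cyclic mod $k$ with representatives $1,\dots,k$ ($\lambda_0:=\lambda_k$). $\underline{SST}(\nu)=\prod_iSST(\nu_i^+)\times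 SST(\nu_i^-)$, $T=(T_1^+,T_1^-,\dots,T_k^+,T_k^-)$, $\mathrm{wt}(T_i)=\mathrm{wt}(T_i^+)-\mathrm{wt}(T_i^-)$. $\underline{\mathrm{CLR}}^\lambda_{\alpha,\nu}=\prod_{i=1}^k\mathrm{CLR}^{\lambda_i}_{\alpha_i,\nu_i^+}\times\mathrm{CLR}^{\lambda_{i-1}}_{\alpha_i,\nu_i^-}$ for $\lambda,\alpha\in\mathcal P^k$. $D(\nu)$ = set of distinguished $T$, i.e. those lying in some $\underline{\mathrm{CLR}}^\lambda_{\alpha,\nu}$ (equivalently $\sum_j\mathrm{wt}(T_j)=0$). For $T\in D(\nu)$, $\lambda_{\min}(T)$ is the coordinatewise (in $\omega$-coordinates) maximum of $S_i^\pm=\varepsilon(T_i^\pm)+\mathrm{wt}(T_i^+)-\sum_{j=2}^i\mathrm{wt}(T_j)$, $i=1,\dots,k$, and $\lambda_i(T)=\lambda_{\min}(T)+\sum_{j=2}^i\mathrm{wt}(T_j)$ (a partition). The stable $q$-multiplicity is the formal power series $$m^\infty_\nu(q,k)=\Big[\prod_{i=1}^\infty(1-q^{ki})\Big]\sum_{\alpha,\lambda\in\mathcal P^k}q^{\sum_i|\lambda_i|}\prod_{i=1}^kc^{\lambda_i}_{\alpha_i,\nu_i^+}c^{\lambda_{i-1}}_{\alpha_i,\nu_i^-}.$$ (Motivation: for the cyclic quiver action of $K=\prod_i\mathbf{GL}_{n_i}$ on $\bigoplus_i\mathrm{Hom}(\mathbb C^{n_i},\mathbb C^{n_{i+1}})$,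 this agrees with the graded multiplicity of the $K$-type $\nu$ in the harmonic polynomials up to degree $\min_i n_i$.) *)

theory Defs
  imports "HOL-Computational_Algebra.Formal_Power_Series"
begin

text \<open>An element of Lambda = direct sum of Z eps_j (j >= 1) is a function
  nat => int with finite support; the value at 0 is unused (kept 0).
  A tableau is a function nat => nat => nat: row r >= 1, column c >= 1,
  value 0 outside the shape.\<close>

type_synonym lam = "nat \<Rightarrow> int"
type_synonym tab = "nat \<Rightarrow> nat \<Rightarrow> nat"

definition Lam :: "lam set" where
  "Lam = {x. x 0 = 0 \<and> finite {j. x j \<noteq> 0}}"

text \<open>omega-coordinates: x = sum_i (x_i - x_(i+1)) omega_i\<close>
definition oc :: "lam \<Rightarrow> nat \<Rightarrow> int" where
  "oc x i = x i - x (Suc i)"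

definition from_omega :: "(nat \<Rightarrow> int) \<Rightarrow> lam" where
  "from_omega c j = (if j = 0 then 0 else (\<Sum>i\<in>{i. j \<le> i \<and> c i \<noteq> 0}. c i))"

definition Par :: "lam set" where
  "Par = {x \<in> Lam. \<forall>i\<ge>1. oc x i \<ge> 0}"

definition le_lam :: "lam \<Rightarrow> lam \<Rightarrow> bool" where
  "le_lam y x \<longleftrightarrow> (\<forall>i\<ge>1. oc y i \<le> oc x i)"

definition psize :: "lam \<Rightarrow> int" where
  "psize x = (\<Sum>j\<in>{j. x j \<noteq> 0}. x j)"

definition cnt :: "nat \<Rightarrow> nat list \<Rightarrow> nat" where
  "cnt a xs = length (filter (\<lambda>x. x = a) xs)"

definition nrows :: "lam \<Rightarrow> nat" where
  "nrows la = Max (insert 0 {j. la j \<noteq> 0})"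

definition cell :: "lam \<Rightarrow> lam \<Rightarrow> nat \<Rightarrow> nat \<Rightarrow> bool" where
  "cell la mu r c \<longleftrightarrow> 1 \<le> r \<and> mu r < int c \<and> int c \<le> la r"

definition sst_skew :: "lam \<Rightarrow> lam \<Rightarrow> tab set" where
  "sst_skew la mu = {T.
     (\<forall>r c. \<not> cell la mu r c \<longrightarrow> T r c = 0) \<and>
     (\<forall>r c. cell la mu r c \<longrightarrow> T r c \<ge> 1) \<and>
     (\<forall>r c. cell la mu r c \<and> cell la mu r (Suc c) \<longrightarrow> T r c \<le> T r (Suc c)) \<and>
     (\<forall>r c. cell la mu r c \<and> cell la mu (Suc r) c \<longrightarrow> T r c < T (Suc r) c)}"

definition zerop :: lam where "zerop = (\<lambda>_. 0)"

definition SST :: "lam \<Rightarrow> tab set" where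
  "SST nu = sst_skew nu zerop"

definition rword :: "lam \<Rightarrow> lam \<Rightarrow> tab \<Rightarrow> nat list" where
  "rword la mu T = concat (map (\<lambda>r. map (\<lambda>c. T r c) [nat (mu r) + 1..<nat (la r) + 1])
                              (rev [1..<nrows la + 1]))"

text \<open>Crystal operator e_i (i >= 1) on words via the signature rule: letters i+1 act as
  opening and letters i as closing brackets; e_i changes the leftmost unmatched i+1 into i.\<close>
definition unm :: "nat \<Rightarrow> nat list \<Rightarrow> nat \<Rightarrow> bool" where
  "unm i w p \<longleftrightarrow> p < length w \<and> w ! p = Suc i \<and>
     (\<forall>q. p < q \<and> q \<le> length w \<longrightarrow>
        cnt i (drop (Suc p) (take q w)) \<le> cnt (Suc i) (drop (Suc p) (take q w)))"

definition e_word :: "nat \<Rightarrow> nat list \<Rightarrow> nat list option" where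
  "e_word i w = (if \<exists>p. unm i w p then Some (w[(LEAST p. unm i w p) := i]) else None)"

text \<open>refill a word into the straight shape nu (inverse of the reading word)\<close>
definition offs :: "lam \<Rightarrow> nat \<Rightarrow> nat" where
  "offs nu r = (\<Sum>j\<in>{r<..nrows nu}. nat (nu j))"

definition tab_of :: "lam \<Rightarrow> nat list \<Rightarrow> tab" where
  "tab_of nu w r c = (if cell nu zerop r c then w ! (offs nu r + c - 1) else 0)"

text \<open>crystal operator e_i on SST(nu); None plays the role of 0\<close>
definition e_tab :: "lam \<Rightarrow> nat \<Rightarrow> tab \<Rightarrow> tab option" where
  "e_tab nu i T = map_option (tab_of nu) (e_word i (rword nu zerop T))"

definition e_iter :: "lam \<Rightarrow> nat \<Rightarrow> nat \<Rightarrow> tab \<Rightarrow> tab option" where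
  "e_iter nu i m T = ((\<lambda>ot. Option.bind ot (e_tab nu i)) ^^ m) (Some T)"

definition epsi :: "lam \<Rightarrow> nat \<Rightarrow> tab \<Rightarrow> nat" where
  "epsi nu i T = (GREATEST m. e_iter nu i m T \<noteq> None)"

definition eps_vec :: "lam \<Rightarrow> tab \<Rightarrow> lam" where
  "eps_vec nu T = from_omega (\<lambda>i. if i = 0 then 0 else int (epsi nu i T))"

definition wt :: "lam \<Rightarrow> tab \<Rightarrow> lam" where
  "wt nu T j = int (cnt j (rword nu zerop T))"

definition CLR :: "lam \<Rightarrow> lam \<Rightarrow> lam \<Rightarrow> tab set" where
  "CLR la al nu = {T \<in> SST nu. le_lam (eps_vec nu T) al \<and> (\<forall>j. al j + wt nu T j = la j)}"

text \<open>Littlewood-Richardson coefficient c^la_{al,nu}, via the classical Littlewood-Richardson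
  rule: number of SST of skew shape la/al with content nu whose reverse reading word
  (rows top to bottom, each right to left) is a lattice word; 0 unless al is contained in la.\<close>
definition lattice :: "nat list \<Rightarrow> bool" where
  "lattice w \<longleftrightarrow> (\<forall>p\<le>length w. \<forall>j\<ge>1. cnt (Suc j) (take p w) \<le> cnt j (take p w))"

definition lrc :: "lam \<Rightarrow> lam \<Rightarrow> lam \<Rightarrow> nat" where
  "lrc la al nu = (if \<forall>j. al j \<le> la j then
      card {S \<in> sst_skew la al. (\<forall>j\<ge>1. int (cnt j (rword la al S)) = nu j)
                               \<and> lattice (rev (rword la al S))}
    else 0)"

text \<open>k-tuples indexed by 1..k (trivial outside), cyclic predecessor\<close>
definition Ptup :: "nat \<Rightarrow> (nat \<Rightarrow> lam) set" where
  "Ptup k = {a. (\<forall>i\<in>{1..k}. a i \<in> Par) \<and> (\<forall>i. i \<notin> {1..k} \<longrightarrow> a i = zerop)}"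

definition prev :: "nat \<Rightarrow> nat \<Rightarrow> nat" where
  "prev k i = (if i = 1 then k else i - 1)"

definition ztab :: tab where "ztab = (\<lambda>_ _. 0)"

type_synonym ttup = "(nat \<Rightarrow> tab) \<times> (nat \<Rightarrow> tab)"

definition uCLR :: "nat \<Rightarrow> (nat \<Rightarrow> lam) \<Rightarrow> (nat \<Rightarrow> lam) \<Rightarrow> (nat \<Rightarrow> lam) \<Rightarrow> (nat \<Rightarrow> lam) \<Rightarrow> ttup set" where
  "uCLR k l a nup num = {(Tp, Tm).
      (\<forall>i\<in>{1..k}. Tp i \<in> CLR (l i) (a i) (nup i) \<and> Tm i \<in> CLR (l (prev k i)) (a i) (num i)) \<and>
      (\<forall>i. i \<notin> {1..k} \<longrightarrow> Tp i = ztab \<and> Tm i = ztab)}"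

definition Dset :: "nat \<Rightarrow> (nat \<Rightarrow> lam) \<Rightarrow> (nat \<Rightarrow> lam) \<Rightarrow> ttup set" where
  "Dset k nup num = (\<Union>l\<in>Ptup k. \<Union>a\<in>Ptup k. uCLR k l a nup num)"

definition wtT :: "(nat \<Rightarrow> lam) \<Rightarrow> (nat \<Rightarrow> lam) \<Rightarrow> ttup \<Rightarrow> nat \<Rightarrow> lam" where
  "wtT nup num T i j = wt (nup i) (fst T i) j - wt (num i) (snd T i) j"

definition Splus :: "(nat \<Rightarrow> lam) \<Rightarrow> (nat \<Rightarrow> lam) \<Rightarrow> ttup \<Rightarrow> nat \<Rightarrow> lam" where
  "Splus nup num T i j = eps_vec (nup i) (fst T i) j + wt (nup i) (fst T i) j
                          - (\<Sum>m\<in>{2..i}. wtT nup num T m j)"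

definition Sminus :: "(nat \<Rightarrow> lam) \<Rightarrow> (nat \<Rightarrow> lam) \<Rightarrow> ttup \<Rightarrow> nat \<Rightarrow> lam" where
  "Sminus nup num T i j = eps_vec (num i) (snd T i) j + wt (nup i) (fst T i) j
                          - (\<Sum>m\<in>{2..i}. wtT nup num T m j)"

definition lmin :: "nat \<Rightarrow> (nat \<Rightarrow> lam) \<Rightarrow> (nat \<Rightarrow> lam) \<Rightarrow> ttup \<Rightarrow> lam" where
  "lmin k nup num T = from_omega (\<lambda>i.
      Max ((\<lambda>m. oc (Splus nup num T m) i) ` {1..k} \<union> (\<lambda>m. oc (Sminus nup num T m) i) ` {1..k}))"

definition lamT :: "nat \<Rightarrow> (nat \<Rightarrow> lam) \<Rightarrow> (nat \<Rightarrow> lam) \<Rightarrow> ttup \<Rightarrow> nat \<Rightarrow> lam" where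
  "lamT k nup num T i j = lmin k nup num T j + (\<Sum>m\<in>{2..i}. wtT nup num T m j)"

definition tot_size :: "nat \<Rightarrow> (nat \<Rightarrow> lam) \<Rightarrow> (nat \<Rightarrow> lam) \<Rightarrow> ttup \<Rightarrow> int" where
  "tot_size k nup num T = (\<Sum>i\<in>{1..k}. psize (lamT k nup num T i))"

text \<open>prod_{i>=1} (1 - q^{k i}) as a formal power series: its n-th coefficient is that
  of the finite product over i = 1..n (the remaining factors are 1 mod q^{n+1}), k >= 1.\<close>
definition euler_factor :: "nat \<Rightarrow> int fps" where
  "euler_factor k = Abs_fps (\<lambda>n. fps_nth (\<Prod>i\<in>{1..n}. (1 - fps_X ^ (k * i)) :: int fps) n)"

definition lrprod :: "nat \<Rightarrow> (nat \<Rightarrow> lam) \<Rightarrow> (nat \<Rightarrow> lam) \<Rightarrow> (nat \<Rightarrow> lam) \<Rightarrow> (nat \<Rightarrow> lam) \<Rightarrow> int" where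
  "lrprod k nup num a l = (\<Prod>i\<in>{1..k}. int (lrc (l i) (a i) (nup i) * lrc (l (prev k i)) (a i) (num i)))"

text \<open>stable q-multiplicity; the sum over (alpha, lambda) in P^k x P^k is taken over its
  (finite) set of nonzero terms with sum_i |lambda_i| = n\<close>
definition m_inf :: "nat \<Rightarrow> (nat \<Rightarrow> lam) \<Rightarrow> (nat \<Rightarrow> lam) \<Rightarrow> int fps" where
  "m_inf k nup num = euler_factor k * Abs_fps (\<lambda>n.
      \<Sum>(a, l)\<in>{(a, l). a \<in> Ptup k \<and> l \<in> Ptup k \<and> (\<Sum>i\<in>{1..k}. psize (l i)) = int n
                       \<and> lrprod k nup num a l \<noteq> 0}. lrprod k nup num a l)"

end

theory Submission
  imports Defs
begin

text \<open>Both sides count the same objects.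

  First, \<open>|CLR(\<lambda>, \<alpha>, \<nu>)| = c(\<lambda>; \<alpha>, \<nu>)\<close>.  By the signature rule, \<open>\<epsilon>\<^sub>i(T)\<close> is the maximal
  excess of letters \<open>i+1\<close> over letters \<open>i\<close> in a suffix of the row reading word of \<open>T\<close>.  So a
  tableau in \<open>CLR(\<lambda>, \<alpha>, \<nu>)\<close> is determined by the matrix \<open>Q j v\<close> counting the letters \<open>v\<close> in
  its row \<open>j\<close>, and the conditions on it become inequalities between partial row and column
  sums of \<open>Q\<close>.  The transposed matrix of an LR tableau of shape \<open>\<lambda>/\<alpha>\<close> and content \<open>\<nu>\<close> ranges
  over exactly the same matrices: the lattice condition and column strictness exchange roles.

  Second, a tuple \<open>T\<close> lies in the underlined \<open>CLR(\<lambda>, \<alpha>, \<nu>)\<close> iff it is distinguished and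
  \<open>\<mu> = \<lambda>\<^sub>1 - \<lambda>\<^sub>m\<^sub>i\<^sub>n(T)\<close> is a partition; then \<open>\<lambda>\<^sub>i = \<lambda>\<^sub>i(T) + \<mu>\<close>, and \<open>\<alpha>\<close> is determined by \<open>\<lambda>\<close>
  and \<open>T\<close>.  Hence the triples \<open>(\<alpha>, \<lambda>, T)\<close> counted by the double sum correspond to the pairs
  \<open>(T, \<mu>)\<close> with \<open>T \<in> D(\<nu>)\<close> and \<open>\<mu>\<close> a partition, where \<open>\<Sum>\<^sub>i |\<lambda>\<^sub>i| = \<Sum>\<^sub>i |\<lambda>\<^sub>i(T)| + k |\<mu>|\<close>.  So the
  double sum is the right-hand side times \<open>\<Sum>\<^sub>\<mu> q^(k |\<mu>|)\<close>, and the Euler factor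
  \<open>\<Prod>\<^sub>i (1 - q^(k i))\<close> is the inverse of that series.\<close>

section \<open>Crystal operators via the signature rule\<close>

lemma cnt_append[simp]: "cnt a (xs @ ys) = cnt a xs + cnt a ys"
  by (simp add: cnt_def)
lemma cnt_Nil[simp]: "cnt a [] = 0" by (simp add: cnt_def)
lemma cnt_Cons: "cnt a (x # xs) = (if x = a then Suc (cnt a xs) else cnt a xs)"
  by (simp add: cnt_def)
lemma cnt_count: "cnt a xs = count (mset xs) a"
  by (induction xs) (auto simp: cnt_def)
lemma cnt_rev[simp]: "cnt a (rev xs) = cnt a xs"
  by (simp add: cnt_count)

definition excess :: "nat \<Rightarrow> nat list \<Rightarrow> nat \<Rightarrow> int" where
  "excess i w q = int (cnt (Suc i) (drop q w)) - int (cnt i (drop q w))"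

definition max_excess :: "nat \<Rightarrow> nat list \<Rightarrow> int" where
  "max_excess i w = Max (excess i w ` {0..length w})"

lemma excess_length: "excess i w (length w) = 0" by (simp add: excess_def)

lemma excess_step: "q < length w \<Longrightarrow>
  excess i w q = excess i w (Suc q) + (if w!q = Suc i then 1 else if w!q = i then -1 else 0)"
proof -
  assume q: "q < length w"
  have d: "drop q w = w!q # drop (Suc q) w" using q by (simp add: Cons_nth_drop_Suc)
  show ?thesis unfolding excess_def d by (auto simp: cnt_Cons)
qed

lemma excess_le_max_excess: "q \<le> length w \<Longrightarrow> excess i w q \<le> max_excess i w"
  unfolding max_excess_def by (rule Max_ge) auto

lemma max_excess_nonneg: "0 \<le> max_excess i w"
  using excess_le_max_excess[of "length w" w i] excess_length[of i w] by simp

lemma max_excess_attained: "\<exists>q\<le>length w. excess i w q = max_excess i w"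
proof -
  have "max_excess i w \<in> excess i w ` {0..length w}" unfolding max_excess_def by (rule Max_in) auto
  thus ?thesis by auto
qed

lemma drop_take_split: "p \<le> q \<Longrightarrow> q \<le> length w \<Longrightarrow> drop p w = drop p (take q w) @ drop q w"
proof -
  assume a: "p \<le> q" "q \<le> length w"
  have "drop p (take q w) @ drop q w = take (q - p) (drop p w) @ drop (q - p) (drop p w)"
    using a by (simp add: drop_take)
  also have "\<dots> = drop p w" by (rule append_take_drop_id)
  finally show ?thesis by simp
qed

lemma unm_iff_excess: "unm i w p \<longleftrightarrow> p < length w \<and> w!p = Suc i \<and>
   (\<forall>q. p < q \<and> q \<le> length w \<longrightarrow> excess i w q \<le> excess i w (Suc p))"
proof -
  have key: "cnt i (drop (Suc p) (take q w)) \<le> cnt (Suc i) (drop (Suc p) (take q w))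
     \<longleftrightarrow> excess i w q \<le> excess i w (Suc p)" if "p < q" "q \<le> length w" for q
  proof -
    have d: "drop (Suc p) w = drop (Suc p) (take q w) @ drop q w"
      using that by (intro drop_take_split) auto
    show ?thesis unfolding excess_def d by simp
  qed
  show ?thesis unfolding unm_def using key by auto
qed

lemma unm_excess_gt: "unm i w p \<Longrightarrow> p < q \<Longrightarrow> q \<le> length w \<Longrightarrow> excess i w q < excess i w p"
  using unm_iff_excess[of i w p] excess_step[of p w i] by force

lemma no_unm_if_max_excess_zero: "max_excess i w = 0 \<Longrightarrow> \<not> unm i w p"
proof
  assume f: "max_excess i w = 0" and u: "unm i w p"
  have pl: "p < length w" using u unm_iff_excess by blast
  have "excess i w (length w) < excess i w p" using unm_excess_gt[OF u pl] by simp
  moreover have "excess i w p \<le> 0" using excess_le_max_excess[of p w i] pl f by simp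
  ultimately show False using excess_length by simp
qed

lemma e_word_None_if_max_excess_zero: "max_excess i w = 0 \<Longrightarrow> e_word i w = None"
  using no_unm_if_max_excess_zero unfolding e_word_def by auto

lemma cnt_update: "j < length xs \<Longrightarrow>
   int (cnt a (xs[j := x])) = int (cnt a xs) - (if xs!j = a then 1 else 0) + (if x = a then 1 else 0)"
proof -
  assume j: "j < length xs"
  have "xs!j \<in># mset xs" using j by simp
  hence "count (mset xs) a = count (mset xs - {#xs!j#}) a + (if xs!j = a then 1 else 0)"
    by (auto simp: count_diff)
  thus ?thesis unfolding cnt_count mset_update[OF j] by auto
qed

text \<open>The letter changed by \<open>e\<^sub>i\<close> sits at the last position where the suffix excess is maximal.\<close>

lemma last_max_excess_unm:
  assumes pos: "0 < max_excess i w"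
  obtains p where "p < length w" "w ! p = Suc i" "unm i w p" "(LEAST q. unm i w q) = p"
    "excess i w (Suc p) = max_excess i w - 1"
    "\<And>q. p < q \<Longrightarrow> q \<le> length w \<Longrightarrow> excess i w q < max_excess i w"
proof -
  define f where "f = max_excess i w"
  define S where "S = {q. q \<le> length w \<and> excess i w q = f}"
  have Sfin: "finite S" unfolding S_def by auto
  have "S \<noteq> {}" using max_excess_attained[of w i] unfolding S_def f_def by auto
  define p where "p = Max S"
  have pS: "p \<in> S" unfolding p_def using Sfin \<open>S \<noteq> {}\<close> by (rule Max_in)
  have p_len: "p < length w"
    using pS excess_length[of i w] pos le_neq_implies_less unfolding S_def f_def by fastforce
  have after_p: "excess i w q < f" if "p < q" "q \<le> length w" for q
    using excess_le_max_excess[of q w i] Max_ge[OF Sfin, of q] that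
    unfolding f_def S_def p_def by fastforce
  have wp: "w ! p = Suc i" and after_Suc_p: "excess i w (Suc p) = f - 1"
    using excess_step[OF p_len, of i] pS after_p[of "Suc p"] p_len unfolding S_def
    by (auto split: if_splits)
  have unm_p: "unm i w p" unfolding unm_iff_excess
    using p_len wp after_p after_Suc_p by fastforce
  have "(LEAST q. unm i w q) = p"
  proof (rule Least_equality)
    fix q assume uq: "unm i w q"
    show "p \<le> q"
    proof (rule ccontr)
      assume "\<not> p \<le> q"
      hence "excess i w p < excess i w q" using unm_excess_gt[OF uq] p_len by auto
      moreover have "excess i w q \<le> f"
        using excess_le_max_excess uq unm_iff_excess unfolding f_def by (metis less_imp_le)
      ultimately show False using pS unfolding S_def by simp
    qed
  qed (fact unm_p)
  thus thesis using that p_len wp unm_p after_Suc_p after_p unfolding f_def by blast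
qed

lemma excess_update_unm:
  assumes "p < length w" "w ! p = Suc i"
  shows "excess i (w[p := i]) q = (if p < q then excess i w q else excess i w q - 2)"
proof (cases "p < q")
  case True thus ?thesis unfolding excess_def by (simp add: drop_update_cancel)
next
  case False
  have d: "drop q (w[p := i]) = (drop q w)[p - q := i]" using False by (simp add: drop_update_swap)
  have l: "p - q < length (drop q w)" and n: "drop q w ! (p - q) = Suc i" using False assms by auto
  show ?thesis unfolding excess_def d using cnt_update[OF l, of "Suc i" i] cnt_update[OF l, of i i] n False
    by simp
qed

lemma e_word_Some_if_max_excess_pos:
  assumes pos: "0 < max_excess i w"
  shows "\<exists>w'. e_word i w = Some w' \<and> max_excess i w' = max_excess i w - 1"
proof -
  obtain p where p: "p < length w" "w ! p = Suc i" "unm i w p" "(LEAST q. unm i w q) = p"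
      "excess i w (Suc p) = max_excess i w - 1"
      "\<And>q. p < q \<Longrightarrow> q \<le> length w \<Longrightarrow> excess i w q < max_excess i w"
    using last_max_excess_unm[OF pos] by blast
  define w' where "w' = w[p := i]"
  have "e_word i w = Some w'"
    unfolding e_word_def w'_def using p(3,4) by auto
  moreover have "max_excess i w' = max_excess i w - 1"
  proof (rule antisym)
    obtain q0 where "q0 \<le> length w'" "excess i w' q0 = max_excess i w'" using max_excess_attained by blast
    thus "max_excess i w' \<le> max_excess i w - 1"
      using excess_update_unm[OF p(1,2), of q0] p(6)[of q0] excess_le_max_excess[of q0 w i]
      unfolding w'_def by (auto split: if_splits)
    show "max_excess i w - 1 \<le> max_excess i w'"
      using excess_update_unm[OF p(1,2), of "Suc p"] p(1,5) excess_le_max_excess[of "Suc p" w' i]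
      unfolding w'_def by simp
  qed
  ultimately show ?thesis by blast
qed

definition e_word_bind :: "nat \<Rightarrow> nat list option \<Rightarrow> nat list option" where
  "e_word_bind i ot = Option.bind ot (e_word i)"

lemma e_word_bind_None[simp]: "(e_word_bind i ^^ m) None = None"
  by (induction m) (auto simp: e_word_bind_def)

lemma e_word_bind_iter_ne_None: "(e_word_bind i ^^ m) (Some w) \<noteq> None \<longleftrightarrow> int m \<le> max_excess i w"
proof (induction m arbitrary: w)
  case 0 thus ?case using max_excess_nonneg by simp
next
  case (Suc m)
  have e: "(e_word_bind i ^^ Suc m) (Some w) = (e_word_bind i ^^ m) (e_word i w)"
    by (simp add: funpow_Suc_right e_word_bind_def del: funpow.simps)
  show ?case
  proof (cases "max_excess i w > 0")
    case True
    then obtain w' where "e_word i w = Some w'" "max_excess i w' = max_excess i w - 1" using e_word_Some_if_max_excess_pos by blast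
    thus ?thesis using e Suc by auto
  next
    case False
    hence "max_excess i w = 0" using max_excess_nonneg[of i w] by simp
    thus ?thesis using e e_word_None_if_max_excess_zero by simp
  qed
qed

lemma length_e_word: "e_word i w = Some w' \<Longrightarrow> length w' = length w"
  unfolding e_word_def by (auto split: if_splits)

lemma map_nth_take_drop: "o' + a \<le> length w \<Longrightarrow>
  map (\<lambda>c. w ! (o' + c - 1)) [1..<a+1] = take a (drop o' w)"
  by (rule nth_equalityI) (auto simp del: upt_Suc)

lemma offs_Suc: "Suc m \<le> nrows nu \<Longrightarrow> offs nu m = nat (nu (Suc m)) + offs nu (Suc m)"
proof -
  assume a: "Suc m \<le> nrows nu"
  have "{m<..nrows nu} = insert (Suc m) {Suc m<..nrows nu}" using a by auto
  thus ?thesis unfolding offs_def by simp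
qed

lemma offs_top: "offs nu (nrows nu) = 0" unfolding offs_def by simp

lemma offs_le: "m \<le> nrows nu \<Longrightarrow> offs nu m \<le> offs nu 0"
proof (induction m)
  case (Suc m) thus ?case using offs_Suc[of m nu] by simp
qed simp

lemma rows_word_tab_of:
  assumes "length w = offs nu 0" "m \<le> nrows nu"
  shows "concat (map (\<lambda>r. map (\<lambda>c. tab_of nu w r c) [1..<nat (nu r) + 1]) (rev [1..<m+1]))
         = drop (offs nu m) w"
  using assms(2)
proof (induction m)
  case 0 thus ?case using assms(1) by simp
next
  case (Suc m)
  have os: "offs nu m = nat (nu (Suc m)) + offs nu (Suc m)" using offs_Suc Suc by blast
  have ol: "offs nu (Suc m) + nat (nu (Suc m)) \<le> length w" using os offs_le[of m nu] Suc assms(1) by simp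
  have row: "map (\<lambda>c. tab_of nu w (Suc m) c) [1..<nat (nu (Suc m)) + 1]
          = map (\<lambda>c. w ! (offs nu (Suc m) + c - 1)) [1..<nat (nu (Suc m)) + 1]"
    by (rule map_cong) (auto simp: tab_of_def cell_def zerop_def)
  have eq: "rev [1..<Suc m+1] = Suc m # rev [1..<m+1]" by simp
  have row2: "map (\<lambda>c. tab_of nu w (Suc m) c) [1..<nat (nu (Suc m)) + 1]
      = take (nat (nu (Suc m))) (drop (offs nu (Suc m)) w)"
    using row map_nth_take_drop[OF ol] by (rule trans)
  have "concat (map (\<lambda>r. map (\<lambda>c. tab_of nu w r c) [1..<nat (nu r) + 1]) (rev [1..<Suc m+1]))
     = take (nat (nu (Suc m))) (drop (offs nu (Suc m)) w) @ drop (offs nu m) w"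
    unfolding eq using Suc by (simp only: list.map concat.simps row2 append_same_eq)
  also have "\<dots> = drop (offs nu (Suc m)) w"
    using os by (metis add.commute append_take_drop_id drop_drop)
  finally show ?case .
qed

lemma rword_tab_of: "length w = offs nu 0 \<Longrightarrow> rword nu zerop (tab_of nu w) = w"
  using rows_word_tab_of[of w nu "nrows nu"] unfolding rword_def by (simp add: offs_top zerop_def)

lemma length_rows_word: "length (concat (map (\<lambda>r. map (\<lambda>c. T r c) [1..<nat (nu r) + 1]) (rev [1..<m+1])))
   = (\<Sum>r\<in>{1..m}. nat (nu r))"
  by (induction m) (auto simp: add.commute)

lemma length_rword: "length (rword nu zerop T) = offs nu 0"
proof -
  have "{0<..nrows nu} = {1..nrows nu}" by auto
  thus ?thesis unfolding rword_def offs_def using length_rows_word[of T nu "nrows nu"]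
    by (simp add: zerop_def)
qed

definition e_tab_bind :: "lam \<Rightarrow> nat \<Rightarrow> tab option \<Rightarrow> tab option" where
  "e_tab_bind nu i ot = Option.bind ot (e_tab nu i)"

lemma e_tab_bind_None[simp]: "(e_tab_bind nu i ^^ m) None = None"
  by (induction m) (auto simp: e_tab_bind_def)

lemma e_tab_tab_of: "length w = offs nu 0 \<Longrightarrow>
   e_tab nu i (tab_of nu w) = map_option (tab_of nu) (e_word i w)"
  unfolding e_tab_def by (simp add: rword_tab_of)

lemma e_tab_bind_iter: "length w = offs nu 0 \<Longrightarrow>
   (e_tab_bind nu i ^^ m) (Some (tab_of nu w)) = map_option (tab_of nu) ((e_word_bind i ^^ m) (Some w))"
proof (induction m arbitrary: w)
  case 0 thus ?case by simp
next
  case (Suc m)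
  have a: "(e_tab_bind nu i ^^ Suc m) (Some (tab_of nu w)) = (e_tab_bind nu i ^^ m) (map_option (tab_of nu) (e_word i w))"
    using Suc.prems by (simp add: funpow_Suc_right e_tab_bind_def e_tab_tab_of del: funpow.simps)
  have b: "(e_word_bind i ^^ Suc m) (Some w) = (e_word_bind i ^^ m) (e_word i w)"
    by (simp add: funpow_Suc_right e_word_bind_def del: funpow.simps)
  show ?case
  proof (cases "e_word i w")
    case None thus ?thesis using a b by simp
  next
    case (Some w')
    hence "length w' = offs nu 0" using length_e_word Suc.prems by metis
    thus ?thesis using a b Some Suc.IH by simp
  qed
qed

lemma e_tab_bind_eq: "(\<lambda>ot. Option.bind ot (e_tab nu i)) = e_tab_bind nu i"
  by (simp add: e_tab_bind_def fun_eq_iff)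

lemma e_iter_ne_None_iff: "e_iter nu i m T \<noteq> None \<longleftrightarrow> (e_word_bind i ^^ m) (Some (rword nu zerop T)) \<noteq> None"
proof (cases m)
  case 0 thus ?thesis by (simp add: e_iter_def)
next
  case (Suc m')
  have a: "e_iter nu i m T = (e_tab_bind nu i ^^ m') (map_option (tab_of nu) (e_word i (rword nu zerop T)))"
    unfolding e_iter_def Suc e_tab_bind_eq
    by (simp add: funpow_Suc_right del: funpow.simps) (simp add: e_tab_bind_def e_tab_def)
  have b: "(e_word_bind i ^^ m) (Some (rword nu zerop T)) = (e_word_bind i ^^ m') (e_word i (rword nu zerop T))"
    unfolding Suc by (simp add: funpow_Suc_right e_word_bind_def del: funpow.simps)
  show ?thesis
  proof (cases "e_word i (rword nu zerop T)")
    case None thus ?thesis using a b by simp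
  next
    case (Some w')
    hence "length w' = offs nu 0" using length_e_word length_rword by metis
    thus ?thesis using a b Some e_tab_bind_iter[of w' nu m' i] by simp
  qed
qed

lemma epsi_eq_max_excess: "epsi nu i T = nat (max_excess i (rword nu zerop T))"
  unfolding epsi_def e_iter_ne_None_iff e_word_bind_iter_ne_None
  by (rule Greatest_equality) (use max_excess_nonneg in auto)

lemma epsi_le_iff: "int (epsi nu i T) \<le> K \<longleftrightarrow>
   (\<forall>q\<le>length (rword nu zerop T). excess i (rword nu zerop T) q \<le> K)"
proof -
  define w where "w = rword nu zerop T"
  have "int (epsi nu i T) = max_excess i w" unfolding epsi_eq_max_excess w_def using max_excess_nonneg by simp
  moreover have "max_excess i w \<le> K \<longleftrightarrow> (\<forall>q\<le>length w. excess i w q \<le> K)"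
    using excess_le_max_excess max_excess_attained by (metis order_trans)
  ultimately show ?thesis unfolding w_def by simp
qed

definition cnt_le :: "nat \<Rightarrow> nat list \<Rightarrow> nat" where
  "cnt_le v xs = length (filter (\<lambda>x. x \<le> v) xs)"

lemma cnt_le_Cons: "cnt_le v (x # xs) = (if x \<le> v then Suc (cnt_le v xs) else cnt_le v xs)"
  by (simp add: cnt_le_def)

lemma cnt_le_eq_0: "\<forall>y\<in>set xs. v < y \<Longrightarrow> cnt_le v xs = 0"
  by (auto simp: cnt_le_def filter_empty_conv not_le)

lemma sorted_nth_le_iff_cnt_le: "sorted xs \<Longrightarrow> i < length xs \<Longrightarrow> (xs!i \<le> v \<longleftrightarrow> i < cnt_le v xs)"
proof (induction xs arbitrary: i)
  case Nil thus ?case by simp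
next
  case (Cons x ys)
  have s: "sorted ys" and xl: "\<forall>y\<in>set ys. x \<le> y" using Cons.prems by auto
  show ?case
  proof (cases i)
    case 0
    show ?thesis
    proof (cases "x \<le> v")
      case True thus ?thesis using 0 by (simp add: cnt_le_Cons)
    next
      case False
      hence "cnt_le v ys = 0" using xl by (intro cnt_le_eq_0) force
      thus ?thesis using 0 False by (simp add: cnt_le_Cons)
    qed
  next
    case (Suc i')
    have il: "i' < length ys" using Cons.prems Suc by simp
    show ?thesis
    proof (cases "x \<le> v")
      case True thus ?thesis using Suc Cons.IH[OF s il] by (simp add: cnt_le_Cons)
    next
      case False
      hence "cnt_le v ys = 0" using xl by (intro cnt_le_eq_0) force
      moreover have "ys!i' > v"
      proof -
        have "ys!i' \<in> set ys" using il by (rule nth_mem)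
        thus ?thesis using xl False by auto
      qed
      ultimately show ?thesis using Suc False by (simp add: cnt_le_Cons)
    qed
  qed
qed

lemma dropWhile_sorted_gt: "sorted x \<Longrightarrow> y \<in> set (dropWhile (\<lambda>y. y \<le> a) x) \<Longrightarrow> a < y"
  by (induction x) (auto split: if_splits)

lemma cnt_zero: "a \<notin> set xs \<Longrightarrow> cnt a xs = 0"
  by (simp add: cnt_def filter_empty_conv) blast

lemma cnt_drop_le: "cnt a (drop q x) \<le> cnt a x"
proof -
  have "cnt a x = cnt a (take q x) + cnt a (drop q x)"
    by (metis append_take_drop_id cnt_append)
  thus ?thesis by simp
qed

lemma sorted_suffix_excess_iff:
  assumes "sorted x"
  shows "(\<forall>q\<le>length x. int (cnt (Suc a) (drop q x)) + A \<le> int (cnt a (drop q x)) + B)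
     \<longleftrightarrow> int (cnt (Suc a) x) + A \<le> B"
proof
  assume h: "\<forall>q\<le>length x. int (cnt (Suc a) (drop q x)) + A \<le> int (cnt a (drop q x)) + B"
  define P where "P = (\<lambda>y::nat. y \<le> a)"
  define q0 where "q0 = length (takeWhile P x)"
  have d: "drop q0 x = dropWhile P x" unfolding q0_def by (simp add: dropWhile_eq_drop)
  have c1: "cnt a (dropWhile P x) = 0"
    using dropWhile_sorted_gt[OF assms, of _ a] unfolding P_def by (intro cnt_zero) blast
  have c2: "cnt (Suc a) (takeWhile P x) = 0"
    by (rule cnt_zero) (auto dest: set_takeWhileD simp: P_def)
  have "cnt (Suc a) x = cnt (Suc a) (takeWhile P x) + cnt (Suc a) (dropWhile P x)"
    by (metis takeWhile_dropWhile_id cnt_append)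
  hence c3: "cnt (Suc a) (dropWhile P x) = cnt (Suc a) x" using c2 by simp
  have "q0 \<le> length x" unfolding q0_def by (rule length_takeWhile_le)
  thus "int (cnt (Suc a) x) + A \<le> B" using h d c1 c3 by force
next
  assume h: "int (cnt (Suc a) x) + A \<le> B"
  show "\<forall>q\<le>length x. int (cnt (Suc a) (drop q x)) + A \<le> int (cnt a (drop q x)) + B"
  proof (intro allI impI)
    fix q
    have "int (cnt (Suc a) (drop q x)) \<le> int (cnt (Suc a) x)" using cnt_drop_le by simp
    thus "int (cnt (Suc a) (drop q x)) + A \<le> int (cnt a (drop q x)) + B" using h by linarith
  qed
qed

definition suffix_bounded :: "nat \<Rightarrow> int \<Rightarrow> nat list \<Rightarrow> bool" where
  "suffix_bounded a K w \<longleftrightarrow> (\<forall>q\<le>length w. int (cnt (Suc a) (drop q w)) \<le> int (cnt a (drop q w)) + K)"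

lemma all_drop_append:
  "(\<forall>q\<le>length (xs @ ys). P (drop q (xs @ ys))) \<longleftrightarrow>
    (\<forall>q\<le>length ys. P (drop q ys)) \<and> (\<forall>q\<le>length xs. P (drop q xs @ ys))"
proof (intro iffI conjI allI impI)
  fix q assume h: "\<forall>q\<le>length (xs @ ys). P (drop q (xs @ ys))" and q: "q \<le> length ys"
  thus "P (drop q ys)" using h[rule_format, of "length xs + q"] by simp
next
  fix q assume h: "(\<forall>q\<le>length ys. P (drop q ys)) \<and> (\<forall>q\<le>length xs. P (drop q xs @ ys))"
    and q: "q \<le> length (xs @ ys)"
  show "P (drop q (xs @ ys))"
    using h q by (cases "q \<le> length xs") auto
next
  fix q assume h: "\<forall>q\<le>length (xs @ ys). P (drop q (xs @ ys))" and q: "q \<le> length xs"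
  thus "P (drop q xs @ ys)" using h[rule_format, of q] by simp
qed

lemma suffix_bounded_append: "suffix_bounded a K (x @ ys) \<longleftrightarrow> suffix_bounded a K ys \<and>
  (\<forall>q\<le>length x. int (cnt (Suc a) (drop q x)) + int (cnt (Suc a) ys)
                  \<le> int (cnt a (drop q x)) + (int (cnt a ys) + K))"
  unfolding suffix_bounded_def
  using all_drop_append[of x ys "\<lambda>w. int (cnt (Suc a) w) \<le> int (cnt a w) + K"] by (simp add: add.assoc)

lemma cnt_concat_rows: "cnt a (concat (map B (rev [1..<m+1]))) = (\<Sum>j\<in>{1..m}. cnt a (B j))"
  by (induction m) (auto simp: add.commute)

lemma ball_atLeastAtMost_Suc: "(\<forall>j\<in>{1..Suc m}. P j) = ((\<forall>j\<in>{1..m}. P j) \<and> P (Suc m))"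
proof -
  have "{1..Suc m} = insert (Suc m) {1..m}" by auto
  thus ?thesis by auto
qed

lemma suffix_bounded_concat_sorted:
  assumes "\<forall>j\<in>{1..m}. sorted (B j)" "0 \<le> K"
  shows "suffix_bounded a K (concat (map B (rev [1..<m+1]))) \<longleftrightarrow>
    (\<forall>j\<in>{1..m}. (\<Sum>j'\<in>{1..j}. int (cnt (Suc a) (B j'))) \<le> (\<Sum>j'\<in>{1..<j}. int (cnt a (B j'))) + K)"
  using assms(1)
proof (induction m)
  case 0 thus ?case using assms(2) by (simp add: suffix_bounded_def)
next
  case (Suc m)
  define W where "W = concat (map B (rev [1..<m+1]))"
  have eq: "concat (map B (rev [1..<Suc m+1])) = B (Suc m) @ W" unfolding W_def by simp
  have srt: "sorted (B (Suc m))" using Suc.prems by auto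
  have cW: "int (cnt c W) = (\<Sum>j'\<in>{1..m}. int (cnt c (B j')))" for c
    unfolding W_def cnt_concat_rows by simp
  have IH: "suffix_bounded a K W \<longleftrightarrow> (\<forall>j\<in>{1..m}. (\<Sum>j'\<in>{1..j}. int (cnt (Suc a) (B j'))) \<le> (\<Sum>j'\<in>{1..<j}. int (cnt a (B j'))) + K)"
    unfolding W_def using Suc by auto
  have last: "(\<forall>q\<le>length (B (Suc m)). int (cnt (Suc a) (drop q (B (Suc m)))) + int (cnt (Suc a) W)
                  \<le> int (cnt a (drop q (B (Suc m)))) + (int (cnt a W) + K))
       \<longleftrightarrow> (\<Sum>j'\<in>{1..Suc m}. int (cnt (Suc a) (B j'))) \<le> (\<Sum>j'\<in>{1..<Suc m}. int (cnt a (B j'))) + K"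
  proof -
    have "{1..<Suc m} = {1..m}" by auto
    moreover have "(\<Sum>j'\<in>{1..Suc m}. int (cnt (Suc a) (B j'))) = int (cnt (Suc a) (B (Suc m))) + int (cnt (Suc a) W)"
      using cW by simp
    ultimately show ?thesis using sorted_suffix_excess_iff[OF srt, of a "int (cnt (Suc a) W)" "int (cnt a W) + K"] cW
      by (simp add: ac_simps)
  qed
  show ?case unfolding eq suffix_bounded_append IH last ball_atLeastAtMost_Suc by (rule refl)
qed

lemma lattice_rev_iff_suffix_bounded: "lattice (rev w) \<longleftrightarrow> (\<forall>j\<ge>1. suffix_bounded j 0 w)"
proof -
  have "lattice (rev w) \<longleftrightarrow> (\<forall>p\<le>length w. \<forall>j\<ge>1. cnt (Suc j) (drop (length w - p) w) \<le> cnt j (drop (length w - p) w))"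
    unfolding lattice_def by (simp add: take_rev)
  also have "\<dots> \<longleftrightarrow> (\<forall>q\<le>length w. \<forall>j\<ge>1. cnt (Suc j) (drop q w) \<le> cnt j (drop q w))"
  proof
    assume h: "\<forall>p\<le>length w. \<forall>j\<ge>1. cnt (Suc j) (drop (length w - p) w) \<le> cnt j (drop (length w - p) w)"
    show "\<forall>q\<le>length w. \<forall>j\<ge>1. cnt (Suc j) (drop q w) \<le> cnt j (drop q w)"
    proof (intro allI impI)
      fix q j :: nat assume "q \<le> length w" "1 \<le> j"
      thus "cnt (Suc j) (drop q w) \<le> cnt j (drop q w)" using h[rule_format, of "length w - q" j] by simp
    qed
  qed auto
  finally show ?thesis unfolding suffix_bounded_def by auto
qed

declare upt_Suc[simp del]

lemma Par_Lam: "x \<in> Par \<Longrightarrow> x \<in> Lam" by (simp add: Par_def)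

lemma Par_Suc_le: "x \<in> Par \<Longrightarrow> 1 \<le> i \<Longrightarrow> x (Suc i) \<le> x i"
  unfolding Par_def oc_def by auto

lemma Par_antimono: "x \<in> Par \<Longrightarrow> 1 \<le> i \<Longrightarrow> i \<le> j \<Longrightarrow> x j \<le> x i"
proof (induction j)
  case 0 thus ?case by simp
next
  case (Suc j)
  show ?case
  proof (cases "i = Suc j")
    case True thus ?thesis by simp
  next
    case False
    hence "i \<le> j" using Suc by simp
    thus ?thesis using Suc Par_Suc_le[of x j] by fastforce
  qed
qed

lemma Lam_zero_beyond_nrows: "x \<in> Lam \<Longrightarrow> nrows x < j \<Longrightarrow> x j = 0"
proof (rule ccontr)
  assume a: "x \<in> Lam" "nrows x < j" "x j \<noteq> 0"
  have "finite {j. x j \<noteq> 0}" using a by (simp add: Lam_def)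
  hence "j \<le> nrows x" unfolding nrows_def using a by (intro Max_ge) auto
  thus False using a by simp
qed

lemma Par_nonneg: "x \<in> Par \<Longrightarrow> 0 \<le> x j"
proof (cases "j = 0")
  case True
  assume "x \<in> Par" thus ?thesis using True by (simp add: Par_def Lam_def)
next
  case False
  assume p: "x \<in> Par"
  have "x (j + nrows x + 1) \<le> x j" using Par_antimono[OF p] False by simp
  moreover have "x (j + nrows x + 1) = 0" using Lam_zero_beyond_nrows[OF Par_Lam[OF p]] by simp
  ultimately show ?thesis by simp
qed

lemma Lam_at_0: "x \<in> Lam \<Longrightarrow> x 0 = 0" by (simp add: Lam_def)

definition row_word :: "lam \<Rightarrow> lam \<Rightarrow> tab \<Rightarrow> nat \<Rightarrow> nat list" where
  "row_word la mu T r = map (T r) [nat (mu r) + 1..<nat (la r) + 1]"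

definition fill_rows :: "lam \<Rightarrow> lam \<Rightarrow> (nat \<Rightarrow> nat list) \<Rightarrow> tab" where
  "fill_rows la mu L r c = (if cell la mu r c then L r ! (c - nat (mu r) - 1) else 0)"

lemma rword_row_word: "rword la mu T = concat (map (row_word la mu T) (rev [1..<nrows la + 1]))"
  unfolding rword_def row_word_def by simp

lemma length_row_word: "length (row_word la mu T r) = nat (la r) - nat (mu r)"
  unfolding row_word_def by simp

definition skew_shape :: "lam \<Rightarrow> lam \<Rightarrow> bool" where
  "skew_shape la mu \<longleftrightarrow> la \<in> Par \<and> mu \<in> Par \<and> (\<forall>j. mu j \<le> la j)"

lemma cell_iff_nat: "skew_shape la mu \<Longrightarrow> cell la mu r c \<longleftrightarrow> 1 \<le> r \<and> nat (mu r) < c \<and> c \<le> nat (la r)"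
  unfolding skew_shape_def cell_def using Par_nonneg[of mu r] Par_nonneg[of la r] by auto

lemma fill_rows_row_word: "skew_shape la mu \<Longrightarrow> T \<in> sst_skew la mu \<Longrightarrow> fill_rows la mu (row_word la mu T) = T"
proof (intro ext)
  fix r c assume sh: "skew_shape la mu" and T: "T \<in> sst_skew la mu"
  show "fill_rows la mu (row_word la mu T) r c = T r c"
  proof (cases "cell la mu r c")
    case True
    hence "nat (mu r) < c" "c \<le> nat (la r)" using cell_iff_nat[OF sh] by auto
    thus ?thesis using True unfolding fill_rows_def row_word_def by simp
  next
    case False thus ?thesis using T unfolding fill_rows_def sst_skew_def by auto
  qed
qed

lemma row_word_fill_rows:
  assumes sh: "skew_shape la mu" and len: "length (L r) = nat (la r) - nat (mu r)"
  shows "row_word la mu (fill_rows la mu L) r = L r"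
proof (cases "r = 0")
  case True
  have "la 0 = 0" using sh Lam_at_0 Par_Lam unfolding skew_shape_def by blast
  thus ?thesis using True len unfolding row_word_def by simp
next
  case False
  show ?thesis unfolding row_word_def
  proof (rule nth_equalityI)
    show "length (map (fill_rows la mu L r) [nat (mu r) + 1..<nat (la r) + 1]) = length (L r)" using len by simp
  next
    fix i assume "i < length (map (fill_rows la mu L r) [nat (mu r) + 1..<nat (la r) + 1])"
    hence i: "i < nat (la r) - nat (mu r)" by simp
    have "cell la mu r (nat (mu r) + 1 + i)" using cell_iff_nat[OF sh] i False by auto
    thus "map (fill_rows la mu L r) [nat (mu r) + 1..<nat (la r) + 1] ! i = L r ! i"
      using i by (simp add: fill_rows_def)
  qed
qed

lemma cnt_le_le_length: "cnt_le v xs \<le> length xs"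
  unfolding cnt_le_def by simp

lemma column_strict_iff_cnt_le:
  fixes X Y :: "nat list" and mX mY lX lY :: nat
  assumes "length X = lX - mX" "length Y = lY - mY" "mY \<le> mX" "lY \<le> lX" "mX \<le> lX" "mY \<le> lY"
    and sX: "sorted X" and sY: "sorted Y" and pos: "\<forall>y\<in>set Y. 1 \<le> y"
  shows "(\<forall>c. mX < c \<and> c \<le> lX \<and> mY < c \<and> c \<le> lY \<longrightarrow> X!(c - mX - 1) < Y!(c - mY - 1))
     \<longleftrightarrow> (\<forall>v\<ge>1. mY + cnt_le v Y \<le> mX + cnt_le (v - 1) X)"
proof
  assume h: "\<forall>c. mX < c \<and> c \<le> lX \<and> mY < c \<and> c \<le> lY \<longrightarrow> X!(c - mX - 1) < Y!(c - mY - 1)"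
  show "\<forall>v\<ge>1. mY + cnt_le v Y \<le> mX + cnt_le (v - 1) X"
  proof (intro allI impI)
    fix v :: nat assume v: "1 \<le> v"
    show "mY + cnt_le v Y \<le> mX + cnt_le (v - 1) X"
    proof (rule ccontr)
      assume c0: "\<not> ?thesis"
      define c where "c = mY + cnt_le v Y"
      have ly: "cnt_le v Y \<le> length Y" by (rule cnt_le_le_length)
      have c1: "mY < c" "c \<le> lY" "mX < c" using c0 assms(2,3,6) ly unfolding c_def by auto
      have c2: "c \<le> lX" using c1 assms(4) by simp
      have iy: "c - mY - 1 < cnt_le v Y" "c - mY - 1 < length Y" using c1 ly assms(2) unfolding c_def by auto
      have yv: "Y!(c - mY - 1) \<le> v" using sorted_nth_le_iff_cnt_le[OF sY iy(2)] iy(1) by simp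
      have ix: "c - mX - 1 < length X" using c1 c2 assms(1) by simp
      have "\<not> (c - mX - 1 < cnt_le (v - 1) X)" using c0 unfolding c_def by simp
      hence "\<not> X!(c - mX - 1) \<le> v - 1" using sorted_nth_le_iff_cnt_le[OF sX ix] by simp
      moreover have "X!(c - mX - 1) < Y!(c - mY - 1)" using h c1 c2 by blast
      ultimately show False using yv by simp
    qed
  qed
next
  assume h: "\<forall>v\<ge>1. mY + cnt_le v Y \<le> mX + cnt_le (v - 1) X"
  show "\<forall>c. mX < c \<and> c \<le> lX \<and> mY < c \<and> c \<le> lY \<longrightarrow> X!(c - mX - 1) < Y!(c - mY - 1)"
  proof (intro allI impI)
    fix c assume c: "mX < c \<and> c \<le> lX \<and> mY < c \<and> c \<le> lY"
    define v where "v = Y!(c - mY - 1)"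
    have iy: "c - mY - 1 < length Y" using c assms(2) by arith
    have v1: "1 \<le> v" using pos iy unfolding v_def by simp
    have "c - mY - 1 < cnt_le v Y" using sorted_nth_le_iff_cnt_le[OF sY iy, of v] unfolding v_def by simp
    hence "c \<le> mX + cnt_le (v - 1) X" using h v1 c by fastforce
    hence "c - mX - 1 < cnt_le (v - 1) X" using c by arith
    moreover have ix: "c - mX - 1 < length X" using c assms(1) by arith
    ultimately have "X!(c - mX - 1) \<le> v - 1" using sorted_nth_le_iff_cnt_le[OF sX ix] by simp
    thus "X!(c - mX - 1) < Y!(c - mY - 1)" using v1 unfolding v_def by simp
  qed
qed

lemma skew_shape_outer_at_0: "skew_shape la mu \<Longrightarrow> la 0 = 0"
  using Lam_at_0 Par_Lam unfolding skew_shape_def by blast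

lemma skew_shape_rows_mono:
  assumes sh: "skew_shape la mu" and r: "1 \<le> r"
  shows "nat (mu (Suc r)) \<le> nat (mu r)" "nat (la (Suc r)) \<le> nat (la r)"
        "nat (mu r) \<le> nat (la r)"
  using Par_Suc_le[of mu r] Par_Suc_le[of la r] sh r unfolding skew_shape_def by (auto simp: nat_mono)

lemma skew_shape_inner_le: "skew_shape la mu \<Longrightarrow> nat (mu r) \<le> nat (la r)"
  unfolding skew_shape_def by (auto simp: nat_mono)

lemma sst_skew_rows:
  assumes sh: "skew_shape la mu" and T: "T \<in> sst_skew la mu"
  shows "sorted (row_word la mu T r) \<and> (\<forall>x\<in>set (row_word la mu T r). 1 \<le> x)"
proof (cases "r = 0")
  case True thus ?thesis using skew_shape_outer_at_0[OF sh] unfolding row_word_def by simp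
next
  case False
  have srt: "sorted (row_word la mu T r)" unfolding sorted_iff_nth_Suc
  proof (intro allI impI)
    fix i assume i: "Suc i < length (row_word la mu T r)"
    hence i': "Suc i < nat (la r) - nat (mu r)" by (simp add: length_row_word)
    have c1: "cell la mu r (nat (mu r) + 1 + i)" "cell la mu r (Suc (nat (mu r) + 1 + i))"
      using cell_iff_nat[OF sh] i' False by auto
    have "T r (nat (mu r) + 1 + i) \<le> T r (Suc (nat (mu r) + 1 + i))"
      using T c1 unfolding sst_skew_def by blast
    thus "row_word la mu T r ! i \<le> row_word la mu T r ! Suc i" using i' unfolding row_word_def by simp
  qed
  have "\<forall>x\<in>set (row_word la mu T r). 1 \<le> x"
  proof
    fix x assume "x \<in> set (row_word la mu T r)"
    then obtain i where i: "i < length (row_word la mu T r)" "x = row_word la mu T r ! i" by (metis in_set_conv_nth)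
    hence i': "i < nat (la r) - nat (mu r)" by (simp add: length_row_word)
    have "cell la mu r (nat (mu r) + 1 + i)" using cell_iff_nat[OF sh] i' False by auto
    hence "1 \<le> T r (nat (mu r) + 1 + i)" using T unfolding sst_skew_def by blast
    thus "1 \<le> x" using i i' unfolding row_word_def by simp
  qed
  thus ?thesis using srt by blast
qed

definition column_cnt_cond :: "lam \<Rightarrow> (nat \<Rightarrow> nat list) \<Rightarrow> bool" where
  "column_cnt_cond mu L \<longleftrightarrow> (\<forall>r\<ge>1. \<forall>v\<ge>1. nat (mu (Suc r)) + cnt_le v (L (Suc r)) \<le> nat (mu r) + cnt_le (v - 1) (L r))"

lemma fill_rows_column_strict_iff:
  assumes sh: "skew_shape la mu" and len: "\<forall>r. length (L r) = nat (la r) - nat (mu r)"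
    and r: "1 \<le> r" and srt: "sorted (L r)" "sorted (L (Suc r))" and pos: "\<forall>y\<in>set (L (Suc r)). 1 \<le> y"
  shows "(\<forall>c. cell la mu r c \<and> cell la mu (Suc r) c \<longrightarrow> fill_rows la mu L r c < fill_rows la mu L (Suc r) c)
     \<longleftrightarrow> (\<forall>v\<ge>1. nat (mu (Suc r)) + cnt_le v (L (Suc r)) \<le> nat (mu r) + cnt_le (v - 1) (L r))"
proof -
  have "(\<forall>c. cell la mu r c \<and> cell la mu (Suc r) c \<longrightarrow> fill_rows la mu L r c < fill_rows la mu L (Suc r) c)
      \<longleftrightarrow> (\<forall>c. nat (mu r) < c \<and> c \<le> nat (la r) \<and> nat (mu (Suc r)) < c \<and> c \<le> nat (la (Suc r)) \<longrightarrow>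
            L r ! (c - nat (mu r) - 1) < L (Suc r) ! (c - nat (mu (Suc r)) - 1))"
    unfolding fill_rows_def using cell_iff_nat[OF sh] r by auto
  also have "\<dots> \<longleftrightarrow> (\<forall>v\<ge>1. nat (mu (Suc r)) + cnt_le v (L (Suc r)) \<le> nat (mu r) + cnt_le (v - 1) (L r))"
    by (rule column_strict_iff_cnt_le)
      (use pos in \<open>simp_all add: len skew_shape_rows_mono[OF sh r] skew_shape_inner_le[OF sh] srt\<close>)
  finally show ?thesis .
qed

lemma fill_rows_sst_skew_iff:
  assumes sh: "skew_shape la mu" and len: "\<forall>r. length (L r) = nat (la r) - nat (mu r)"
  shows "fill_rows la mu L \<in> sst_skew la mu \<longleftrightarrow>
    (\<forall>r. sorted (L r) \<and> (\<forall>x\<in>set (L r). 1 \<le> x)) \<and> column_cnt_cond mu L"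
proof -
  define T where "T = fill_rows la mu L"
  have T_cell: "cell la mu r c \<Longrightarrow> T r c = L r ! (c - nat (mu r) - 1)" for r c
    unfolding T_def fill_rows_def by simp
  note columns = fill_rows_column_strict_iff[OF sh len, folded T_def]
  show ?thesis
  proof
    assume T: "fill_rows la mu L \<in> sst_skew la mu"
    have rows: "sorted (L r) \<and> (\<forall>x\<in>set (L r). 1 \<le> x)" for r
      using sst_skew_rows[OF sh T, of r] row_word_fill_rows[OF sh] len by simp
    have "column_cnt_cond mu L" unfolding column_cnt_cond_def
    proof (intro allI impI)
      fix r v :: nat assume r: "1 \<le> r" and v: "1 \<le> v"
      have "\<forall>c. cell la mu r c \<and> cell la mu (Suc r) c \<longrightarrow> T r c < T (Suc r) c"
        using T unfolding T_def sst_skew_def by blast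
      thus "nat (mu (Suc r)) + cnt_le v (L (Suc r)) \<le> nat (mu r) + cnt_le (v - 1) (L r)"
        using columns[OF r] rows[of r] rows[of "Suc r"] v by blast
    qed
    thus "(\<forall>r. sorted (L r) \<and> (\<forall>x\<in>set (L r). 1 \<le> x)) \<and> column_cnt_cond mu L" using rows by simp
  next
    assume h: "(\<forall>r. sorted (L r) \<and> (\<forall>x\<in>set (L r). 1 \<le> x)) \<and> column_cnt_cond mu L"
    have pos: "\<forall>r c. cell la mu r c \<longrightarrow> T r c \<ge> 1"
    proof (intro allI impI)
      fix r c assume c: "cell la mu r c"
      hence "c - nat (mu r) - 1 < length (L r)" using cell_iff_nat[OF sh] len by auto
      hence "L r ! (c - nat (mu r) - 1) \<in> set (L r)" by (rule nth_mem)
      thus "T r c \<ge> 1" using h T_cell[OF c] by simp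
    qed
    have rows: "\<forall>r c. cell la mu r c \<and> cell la mu r (Suc c) \<longrightarrow> T r c \<le> T r (Suc c)"
    proof (intro allI impI)
      fix r c assume c: "cell la mu r c \<and> cell la mu r (Suc c)"
      hence i: "Suc (c - nat (mu r) - 1) < length (L r)" "Suc c - nat (mu r) - 1 = Suc (c - nat (mu r) - 1)"
        using cell_iff_nat[OF sh] len by auto
      have "L r ! (c - nat (mu r) - 1) \<le> L r ! Suc (c - nat (mu r) - 1)"
        using h i(1) unfolding sorted_iff_nth_Suc by blast
      thus "T r c \<le> T r (Suc c)" using T_cell c i(2) by simp
    qed
    have cols: "\<forall>r c. cell la mu r c \<and> cell la mu (Suc r) c \<longrightarrow> T r c < T (Suc r) c"
    proof (intro allI impI)
      fix r c assume c: "cell la mu r c \<and> cell la mu (Suc r) c"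
      hence r: "1 \<le> r" using cell_iff_nat[OF sh] by auto
      show "T r c < T (Suc r) c" using columns[OF r] h r c unfolding column_cnt_cond_def by blast
    qed
    show "fill_rows la mu L \<in> sst_skew la mu"
      using pos rows cols unfolding T_def[symmetric] sst_skew_def by (simp add: T_def fill_rows_def)
  qed
qed

definition word_of_counts :: "(nat \<Rightarrow> nat) \<Rightarrow> nat \<Rightarrow> nat list" where
  "word_of_counts f B = concat (map (\<lambda>v. replicate (f v) v) [1..<B+1])"

lemma word_of_counts_Suc: "word_of_counts f (Suc B) = word_of_counts f B @ replicate (f (Suc B)) (Suc B)"
  unfolding word_of_counts_def by (simp add: upt_Suc)

lemma word_of_counts_0: "word_of_counts f 0 = []" unfolding word_of_counts_def by simp

lemma cnt_replicate: "cnt a (replicate n x) = (if x = a then n else 0)"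
  by (induction n) (auto simp: cnt_Cons)

lemma cnt_word_of_counts: "cnt a (word_of_counts f B) = (if 1 \<le> a \<and> a \<le> B then f a else 0)"
  by (induction B) (auto simp: word_of_counts_Suc word_of_counts_0 cnt_replicate)

lemma set_word_of_counts: "set (word_of_counts f B) \<subseteq> {1..B}"
  by (induction B) (auto simp: word_of_counts_Suc word_of_counts_0)

lemma sorted_word_of_counts: "sorted (word_of_counts f B)"
proof (induction B)
  case 0 thus ?case by (simp add: word_of_counts_0)
next
  case (Suc B)
  thus ?case using set_word_of_counts[of f B] by (auto simp: word_of_counts_Suc sorted_append)
qed

lemma length_word_of_counts: "length (word_of_counts f B) = (\<Sum>v\<in>{1..B}. f v)"
  by (induction B) (auto simp: word_of_counts_Suc word_of_counts_0)

lemma cnt_le_eq_sum: "cnt_le v xs = (\<Sum>a\<in>{0..v}. cnt a xs)"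
proof (induction xs)
  case Nil thus ?case by (simp add: cnt_le_def)
next
  case (Cons x xs)
  have "(\<Sum>a\<in>{0..v}. cnt a (x # xs)) = (\<Sum>a\<in>{0..v}. (if x = a then 1 else 0) + cnt a xs)"
    by (rule sum.cong) (auto simp: cnt_Cons)
  also have "\<dots> = (if x \<le> v then 1 else 0) + (\<Sum>a\<in>{0..v}. cnt a xs)"
    by (simp add: sum.distrib)
  finally show ?case using Cons by (simp add: cnt_le_Cons)
qed

lemma cnt_le_eq_sum_pos: "0 \<notin> set xs \<Longrightarrow> cnt_le v xs = (\<Sum>a\<in>{1..v}. cnt a xs)"
proof -
  assume z: "0 \<notin> set xs"
  have "{0..v} = insert 0 {1..v}" by auto
  moreover have "cnt 0 xs = 0" using z by (rule cnt_zero)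
  ultimately show ?thesis unfolding cnt_le_eq_sum by simp
qed

lemma length_eq_sum_cnt: "set xs \<subseteq> {1..B} \<Longrightarrow> length xs = (\<Sum>a\<in>{1..B}. cnt a xs)"
proof -
  assume s: "set xs \<subseteq> {1..B}"
  have "filter (\<lambda>x. x \<le> B) xs = xs" using s by (intro filter_True) auto
  hence "cnt_le B xs = length xs" unfolding cnt_le_def by simp
  moreover have "0 \<notin> set xs" using s by auto
  ultimately show ?thesis using cnt_le_eq_sum_pos[of xs B] by simp
qed

lemma sorted_eq_if_cnt_eq: "sorted xs \<Longrightarrow> sorted ys \<Longrightarrow> (\<forall>a. cnt a xs = cnt a ys) \<Longrightarrow> xs = ys"
proof -
  assume a: "sorted xs" "sorted ys" "\<forall>a. cnt a xs = cnt a ys"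
  have m: "mset xs = mset ys" using a(3) by (intro multiset_eqI) (simp add: cnt_count)
  have "sort ys = xs" using properties_for_sort[OF m a(1)] .
  moreover have "sort ys = ys" using a(2) by (simp add: sorted_sort_id)
  ultimately show ?thesis by simp
qed

lemma partial_sums_bound_beyond:
  fixes f g :: "nat \<Rightarrow> int" and K C :: int and N :: nat
  assumes z: "\<forall>j>N. f j = 0 \<and> g j = 0" and g0: "\<forall>j. 0 \<le> g j" and KC: "K \<le> C"
  shows "(\<forall>j\<in>{1..N}. K + (\<Sum>j'\<in>{1..j}. f j') \<le> C + (\<Sum>j'\<in>{1..<j}. g j'))
     \<longleftrightarrow> (\<forall>j\<ge>1. K + (\<Sum>j'\<in>{1..j}. f j') \<le> C + (\<Sum>j'\<in>{1..<j}. g j'))"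
proof
  assume h: "\<forall>j\<in>{1..N}. K + (\<Sum>j'\<in>{1..j}. f j') \<le> C + (\<Sum>j'\<in>{1..<j}. g j')"
  show "\<forall>j\<ge>1. K + (\<Sum>j'\<in>{1..j}. f j') \<le> C + (\<Sum>j'\<in>{1..<j}. g j')"
  proof (intro allI impI)
    fix j :: nat assume j: "1 \<le> j"
    show "K + (\<Sum>j'\<in>{1..j}. f j') \<le> C + (\<Sum>j'\<in>{1..<j}. g j')"
    proof (cases "j \<le> N")
      case True thus ?thesis using h j by auto
    next
      case False
      have sf: "(\<Sum>j'\<in>{1..j}. f j') = (\<Sum>j'\<in>{1..N}. f j')"
        by (rule sum.mono_neutral_right) (use False z in auto)
      have sg: "(\<Sum>j'\<in>{1..<j}. g j') = (\<Sum>j'\<in>{1..N}. g j')"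
        by (rule sum.mono_neutral_right) (use False z in auto)
      show ?thesis
      proof (cases "N = 0")
        case True
        hence "(\<Sum>j'\<in>{1..N}. f j') = 0" "0 \<le> (\<Sum>j'\<in>{1..N}. g j')" by auto
        thus ?thesis using sf sg KC by linarith
      next
        case False
        hence "K + (\<Sum>j'\<in>{1..N}. f j') \<le> C + (\<Sum>j'\<in>{1..<N}. g j')" using h by auto
        moreover have "(\<Sum>j'\<in>{1..<N}. g j') \<le> (\<Sum>j'\<in>{1..N}. g j')"
          by (rule sum_mono2) (use g0 in auto)
        ultimately show ?thesis using sf sg by linarith
      qed
    qed
  qed
qed auto

section \<open>CLR tableaux as content matrices\<close>

lemma oc_from_omega:
  assumes fin: "finite {i. c i \<noteq> 0}" and j: "1 \<le> j"
  shows "oc (from_omega c) j = c j"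
proof -
  define S where "S j = {i. j \<le> i \<and> c i \<noteq> 0}" for j
  have fS: "finite (S j)" for j using fin unfolding S_def by (rule rev_finite_subset) auto
  have "S j = (if c j \<noteq> 0 then insert j (S (Suc j)) else S (Suc j))" unfolding S_def
    by (auto simp: Suc_le_eq order.order_iff_strict)
  moreover have "j \<notin> S (Suc j)" unfolding S_def by simp
  ultimately have "sum c (S j) = c j + sum c (S (Suc j))"
    using fS by (cases "c j = 0") auto
  thus ?thesis using j unfolding oc_def from_omega_def S_def by simp
qed

lemma from_omega_0[simp]: "from_omega c 0 = 0" by (simp add: from_omega_def)

lemma from_omega_zero_beyond: "\<forall>i\<ge>n. c i = 0 \<Longrightarrow> n \<le> j \<Longrightarrow> from_omega c j = 0"
  unfolding from_omega_def by auto

lemma zerop_Par: "zerop \<in> Par"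
  unfolding Par_def Lam_def oc_def zerop_def by simp

lemma skew_shape_straight: "nu \<in> Par \<Longrightarrow> skew_shape nu zerop"
  unfolding skew_shape_def using zerop_Par Par_nonneg by (auto simp: zerop_def)

lemma max_excess_pos_mem: "0 < max_excess i w \<Longrightarrow> Suc i \<in> set w"
proof -
  assume f: "0 < max_excess i w"
  obtain q where q: "q \<le> length w" "excess i w q = max_excess i w" using max_excess_attained by blast
  hence "cnt (Suc i) (drop q w) \<noteq> 0" using f unfolding excess_def by linarith
  hence "Suc i \<in> set (drop q w)" by (metis cnt_zero)
  thus ?thesis by (rule in_set_dropD)
qed

lemma finite_epsi_support: "finite {i. (if i = 0 then 0 else int (epsi nu i T)) \<noteq> 0}"
proof -
  define w where "w = rword nu zerop T"
  have "{i. (if i = 0 then 0 else int (epsi nu i T)) \<noteq> 0} \<subseteq> {i. Suc i \<in> set w}"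
  proof
    fix i assume "i \<in> {i. (if i = 0 then 0 else int (epsi nu i T)) \<noteq> 0}"
    hence "0 < max_excess i w" unfolding w_def epsi_eq_max_excess by (auto split: if_splits)
    thus "i \<in> {i. Suc i \<in> set w}" using max_excess_pos_mem by simp
  qed
  moreover have "finite {i. Suc i \<in> set w}"
  proof (rule finite_subset)
    show "{i. Suc i \<in> set w} \<subseteq> (\<lambda>x. x - 1) ` set w"
    proof
      fix i assume "i \<in> {i. Suc i \<in> set w}"
      hence "Suc i \<in> set w" by simp
      thus "i \<in> (\<lambda>x. x - 1) ` set w" by (rule rev_image_eqI) simp
    qed
  qed simp
  ultimately show ?thesis by (rule finite_subset)
qed

lemma oc_eps_vec: "1 \<le> i \<Longrightarrow> oc (eps_vec nu T) i = int (epsi nu i T)"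
  unfolding eps_vec_def using oc_from_omega[OF finite_epsi_support] by simp

definition row_content :: "lam \<Rightarrow> tab \<Rightarrow> nat \<Rightarrow> nat \<Rightarrow> nat" where
  "row_content nu T j v = cnt v (row_word nu zerop T j)"

text \<open>For the row-content matrix of \<open>T \<in> SST(\<nu>)\<close>, \<open>row_dominant\<close> expresses column strictness
  of \<open>T\<close> and \<open>col_dominant \<alpha>\<close> expresses \<open>\<epsilon>(T) \<le> \<alpha>\<close>; for the transposed matrix of an LR tableau
  of shape \<open>\<lambda>/\<alpha>\<close> the roles are exchanged (lattice word, column strictness).\<close>

definition row_dominant :: "(nat \<Rightarrow> nat \<Rightarrow> nat) \<Rightarrow> bool" where
  "row_dominant Q \<longleftrightarrow> (\<forall>j\<ge>1. \<forall>v\<ge>1. (\<Sum>v'\<in>{1..v}. Q (Suc j) v') \<le> (\<Sum>v'\<in>{1..<v}. Q j v'))"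

definition col_dominant :: "lam \<Rightarrow> (nat \<Rightarrow> nat \<Rightarrow> nat) \<Rightarrow> bool" where
  "col_dominant al Q \<longleftrightarrow> (\<forall>r\<ge>1. \<forall>j\<ge>1. nat (al (Suc r)) + (\<Sum>j'\<in>{1..j}. Q j' (Suc r)) \<le> nat (al r) + (\<Sum>j'\<in>{1..<j}. Q j' r))"

lemma col_dominant_int: "col_dominant al Q \<longleftrightarrow> (\<forall>r\<ge>1. \<forall>j\<ge>1. int (nat (al (Suc r))) + (\<Sum>j'\<in>{1..j}. int (Q j' (Suc r)))
     \<le> int (nat (al r)) + (\<Sum>j'\<in>{1..<j}. int (Q j' r)))"
  unfolding col_dominant_def by (simp only: of_nat_sum[symmetric] of_nat_add[symmetric] of_nat_le_iff)

definition content_matrices :: "lam \<Rightarrow> lam \<Rightarrow> lam \<Rightarrow> (nat \<Rightarrow> nat \<Rightarrow> nat) set" where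
  "content_matrices la al nu = {Q. (\<forall>j v. Q j v \<noteq> 0 \<longrightarrow> 1 \<le> j \<and> j \<le> nrows nu \<and> 1 \<le> v \<and> v \<le> nrows la) \<and>
     (\<forall>j. (\<Sum>v\<in>{1..nrows la}. Q j v) = nat (nu j)) \<and>
     (\<forall>v. (\<Sum>j\<in>{1..nrows nu}. Q j v) = nat (la v) - nat (al v)) \<and> row_dominant Q \<and> col_dominant al Q}"

lemma row_word_zero_beyond: "nu \<in> Par \<Longrightarrow> (j = 0 \<or> nrows nu < j) \<Longrightarrow> row_word nu mu T j = []"
  unfolding row_word_def using Lam_zero_beyond_nrows[of nu j] Par_Lam[of nu] Lam_at_0[of nu] by auto

lemma row_content_zero_beyond: "nu \<in> Par \<Longrightarrow> (j = 0 \<or> nrows nu < j) \<Longrightarrow> row_content nu T j v = 0"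
  unfolding row_content_def using row_word_zero_beyond by simp

lemma wt_eq_sum_row_content: "wt nu T v = int (\<Sum>j\<in>{1..nrows nu}. row_content nu T j v)"
  unfolding wt_def row_content_def rword_row_word cnt_concat_rows by simp

lemma atLeastAtMost_pred: "1 \<le> v \<Longrightarrow> {1..v - 1} = {1..<v::nat}" by auto

lemma row_dominant_row_content:
  assumes nu: "nu \<in> Par" and T: "T \<in> SST nu"
  shows "row_dominant (row_content nu T)"
proof -
  have sh: "skew_shape nu zerop" using skew_shape_straight[OF nu] .
  have T': "T \<in> sst_skew nu zerop" using T unfolding SST_def .
  have eq: "fill_rows nu zerop (row_word nu zerop T) = T" by (rule fill_rows_row_word[OF sh T'])
  have len: "\<forall>r. length (row_word nu zerop T r) = nat (nu r) - nat (zerop r)" by (simp add: length_row_word)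
  have "fill_rows nu zerop (row_word nu zerop T) \<in> sst_skew nu zerop" using eq T' by simp
  hence "column_cnt_cond zerop (row_word nu zerop T)" using fill_rows_sst_skew_iff[OF sh len] by blast
  hence cc: "\<forall>r\<ge>1. \<forall>v\<ge>1. cnt_le v (row_word nu zerop T (Suc r)) \<le> cnt_le (v - 1) (row_word nu zerop T r)"
    unfolding column_cnt_cond_def by (simp add: zerop_def)
  have z: "0 \<notin> set (row_word nu zerop T r)" for r using sst_skew_rows[OF sh T', of r] by auto
  show ?thesis unfolding row_dominant_def
  proof (intro allI impI)
    fix j v :: nat assume j: "1 \<le> j" and v: "1 \<le> v"
    have "cnt_le v (row_word nu zerop T (Suc j)) \<le> cnt_le (v - 1) (row_word nu zerop T j)" using cc j v by blast
    thus "(\<Sum>v'\<in>{1..v}. row_content nu T (Suc j) v') \<le> (\<Sum>v'\<in>{1..<v}. row_content nu T j v')"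
      unfolding row_content_def cnt_le_eq_sum_pos[OF z] atLeastAtMost_pred[OF v] .
  qed
qed

text \<open>Since the rows of \<open>T\<close> are sorted, only the suffixes of the reading word that start at a
  row boundary matter.\<close>

lemma epsi_le_oc_iff:
  assumes nu: "nu \<in> Par" and al: "al \<in> Par" and T: "T \<in> SST nu" and i: "1 \<le> i"
  shows "int (epsi nu i T) \<le> oc al i \<longleftrightarrow>
    (\<forall>j\<ge>1. int (nat (al (Suc i))) + (\<Sum>j'\<in>{1..j}. int (row_content nu T j' (Suc i)))
            \<le> int (nat (al i)) + (\<Sum>j'\<in>{1..<j}. int (row_content nu T j' i)))"
proof -
  have sh: "skew_shape nu zerop" using skew_shape_straight[OF nu] .
  have T': "T \<in> sst_skew nu zerop" using T unfolding SST_def .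
  define R where "R = row_word nu zerop T"
  define N where "N = nrows nu"
  have srt: "\<forall>j\<in>{1..N}. sorted (R j)" using sst_skew_rows[OF sh T'] unfolding R_def by blast
  have w: "rword nu zerop T = concat (map R (rev [1..<N+1]))" unfolding R_def N_def by (rule rword_row_word)
  have al_nat: "int (nat (al i)) = al i" "int (nat (al (Suc i))) = al (Suc i)"
    using Par_nonneg[OF al] by auto
  have "int (epsi nu i T) \<le> oc al i \<longleftrightarrow> suffix_bounded i (oc al i) (rword nu zerop T)"
    unfolding epsi_le_iff suffix_bounded_def excess_def by (simp add: diff_le_eq add.commute)
  also have "\<dots> \<longleftrightarrow> (\<forall>j\<in>{1..N}. (\<Sum>j'\<in>{1..j}. int (cnt (Suc i) (R j'))) \<le> (\<Sum>j'\<in>{1..<j}. int (cnt i (R j'))) + oc al i)"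
    unfolding w using al i by (intro suffix_bounded_concat_sorted[OF srt]) (auto simp: Par_def)
  also have "\<dots> \<longleftrightarrow> (\<forall>j\<in>{1..N}. int (nat (al (Suc i))) + (\<Sum>j'\<in>{1..j}. int (row_content nu T j' (Suc i)))
            \<le> int (nat (al i)) + (\<Sum>j'\<in>{1..<j}. int (row_content nu T j' i)))"
    unfolding row_content_def R_def oc_def al_nat by (intro ball_cong refl) linarith
  also have "\<dots> \<longleftrightarrow> (\<forall>j\<ge>1. int (nat (al (Suc i))) + (\<Sum>j'\<in>{1..j}. int (row_content nu T j' (Suc i)))
            \<le> int (nat (al i)) + (\<Sum>j'\<in>{1..<j}. int (row_content nu T j' i)))"
  proof (rule partial_sums_bound_beyond)
    show "\<forall>j>N. int (row_content nu T j (Suc i)) = 0 \<and> int (row_content nu T j i) = 0"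
      using row_content_zero_beyond[OF nu] unfolding N_def by simp
    show "int (nat (al (Suc i))) \<le> int (nat (al i))" using Par_Suc_le[OF al i] by simp
  qed simp
  finally show ?thesis .
qed

lemma eps_vec_le_iff_col_dominant:
  assumes nu: "nu \<in> Par" and al: "al \<in> Par" and T: "T \<in> SST nu"
  shows "le_lam (eps_vec nu T) al \<longleftrightarrow> col_dominant al (row_content nu T)"
  unfolding le_lam_def col_dominant_int using epsi_le_oc_iff[OF nu al T] oc_eps_vec by simp

lemma column_cnt_cond_straight_iff:
  assumes z: "\<forall>r. 0 \<notin> set (L r)"
  shows "column_cnt_cond zerop L \<longleftrightarrow> row_dominant (\<lambda>j v. cnt v (L j))"
proof -
  have "cnt_le v (L (Suc r)) \<le> cnt_le (v - 1) (L r) \<longleftrightarrow>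
      (\<Sum>v'\<in>{1..v}. cnt v' (L (Suc r))) \<le> (\<Sum>v'\<in>{1..<v}. cnt v' (L r))" if v: "1 \<le> v" for r v
    unfolding cnt_le_eq_sum_pos[OF z[rule_format]] atLeastAtMost_pred[OF v] ..
  thus ?thesis unfolding column_cnt_cond_def row_dominant_def zerop_def by simp
qed

lemma row_word_ne_Nil_range: "la \<in> Par \<Longrightarrow> row_word la mu T j \<noteq> [] \<Longrightarrow> j \<in> {1..nrows la}"
  using row_word_zero_beyond[of la j mu T] by fastforce

lemma set_row_word_subset_rword: "la \<in> Par \<Longrightarrow> set (row_word la mu T j) \<subseteq> set (rword la mu T)"
  using row_word_ne_Nil_range[of la mu T j] unfolding rword_row_word by fastforce

lemma CLR_row_entries:
  assumes la: "la \<in> Par" and al: "al \<in> Par" and nu: "nu \<in> Par" and T: "T \<in> CLR la al nu"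
  shows "set (row_word nu zerop T j) \<subseteq> {1..nrows la}"
proof
  fix x assume x: "x \<in> set (row_word nu zerop T j)"
  have "T \<in> sst_skew nu zerop" using T unfolding CLR_def SST_def by blast
  hence "1 \<le> x" using sst_skew_rows[OF skew_shape_straight[OF nu]] x by blast
  have "0 < wt nu T x"
    using set_row_word_subset_rword[OF nu] x unfolding wt_def by (auto simp: cnt_count)
  moreover have "al x + wt nu T x = la x" using T unfolding CLR_def by blast
  ultimately have "la x \<noteq> 0" using Par_nonneg[OF al, of x] by linarith
  hence "x \<le> nrows la" using Lam_zero_beyond_nrows[OF Par_Lam[OF la]] not_le by blast
  thus "x \<in> {1..nrows la}" using \<open>1 \<le> x\<close> by simp
qed

lemma row_content_in_content_matrices:
  assumes la: "la \<in> Par" and al: "al \<in> Par" and nu: "nu \<in> Par" and le: "\<forall>j. al j \<le> la j"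
    and T: "T \<in> CLR la al nu"
  shows "row_content nu T \<in> content_matrices la al nu"
proof -
  have TS: "T \<in> SST nu" and ep: "le_lam (eps_vec nu T) al" and wl: "\<forall>j. al j + wt nu T j = la j"
    using T unfolding CLR_def by auto
  note entries = CLR_row_entries[OF la al nu T]
  have "\<forall>j v. row_content nu T j v \<noteq> 0 \<longrightarrow> 1 \<le> j \<and> j \<le> nrows nu \<and> 1 \<le> v \<and> v \<le> nrows la"
  proof (intro allI impI)
    fix j v assume "row_content nu T j v \<noteq> 0"
    hence v: "v \<in> set (row_word nu zerop T j)" by (simp add: row_content_def cnt_count)
    hence "j \<in> {1..nrows nu}" using row_word_ne_Nil_range[OF nu] by (metis empty_iff empty_set)
    thus "1 \<le> j \<and> j \<le> nrows nu \<and> 1 \<le> v \<and> v \<le> nrows la" using entries[of j] v by auto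
  qed
  moreover have "\<forall>j. (\<Sum>v\<in>{1..nrows la}. row_content nu T j v) = nat (nu j)"
    using length_eq_sum_cnt[OF entries] unfolding row_content_def length_row_word
    by (simp add: zerop_def)
  moreover have "\<forall>v. (\<Sum>j\<in>{1..nrows nu}. row_content nu T j v) = nat (la v) - nat (al v)"
  proof
    fix v
    have "int (\<Sum>j\<in>{1..nrows nu}. row_content nu T j v) = la v - al v"
      using wt_eq_sum_row_content[of nu T v] wl[rule_format, of v] by (simp del: of_nat_sum)
    thus "(\<Sum>j\<in>{1..nrows nu}. row_content nu T j v) = nat (la v) - nat (al v)"
      using le[rule_format, of v] Par_nonneg[OF al, of v] by linarith
  qed
  moreover have "row_dominant (row_content nu T)" using row_dominant_row_content[OF nu TS] .
  moreover have "col_dominant al (row_content nu T)" using eps_vec_le_iff_col_dominant[OF nu al TS] ep by simp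
  ultimately show ?thesis unfolding content_matrices_def by blast
qed

lemma inj_on_row_content: assumes nu: "nu \<in> Par" shows "inj_on (row_content nu) (SST nu)"
proof
  fix T T' assume T: "T \<in> SST nu" and T': "T' \<in> SST nu" and eq: "row_content nu T = row_content nu T'"
  have sh: "skew_shape nu zerop" using skew_shape_straight[OF nu] .
  have s1: "T \<in> sst_skew nu zerop" "T' \<in> sst_skew nu zerop" using T T' unfolding SST_def by auto
  have "row_word nu zerop T j = row_word nu zerop T' j" for j
  proof (rule sorted_eq_if_cnt_eq)
    show "sorted (row_word nu zerop T j)" "sorted (row_word nu zerop T' j)" using sst_skew_rows[OF sh] s1 by auto
    show "\<forall>a. cnt a (row_word nu zerop T j) = cnt a (row_word nu zerop T' j)"
      using eq unfolding row_content_def by metis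
  qed
  hence "row_word nu zerop T = row_word nu zerop T'" by blast
  thus "T = T'" using fill_rows_row_word[OF sh s1(1)] fill_rows_row_word[OF sh s1(2)] by metis
qed

lemma row_content_onto:
  assumes la: "la \<in> Par" and al: "al \<in> Par" and nu: "nu \<in> Par" and le: "\<forall>j. al j \<le> la j"
    and Q: "Q \<in> content_matrices la al nu"
  shows "\<exists>T\<in>CLR la al nu. row_content nu T = Q"
proof -
  define B where "B = nrows la"
  define L where "L j = word_of_counts (Q j) B" for j
  define T where "T = fill_rows nu zerop L"
  have sh: "skew_shape nu zerop" using skew_shape_straight[OF nu] .
  have supp: "\<forall>j v. Q j v \<noteq> 0 \<longrightarrow> 1 \<le> j \<and> j \<le> nrows nu \<and> 1 \<le> v \<and> v \<le> nrows la"
    and rows: "\<forall>j. (\<Sum>v\<in>{1..nrows la}. Q j v) = nat (nu j)"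
    and cols: "\<forall>v. (\<Sum>j\<in>{1..nrows nu}. Q j v) = nat (la v) - nat (al v)"
    and ct: "row_dominant Q" and cs: "col_dominant al Q" using Q unfolding content_matrices_def by auto
  have len: "\<forall>r. length (L r) = nat (nu r) - nat (zerop r)"
    using rows unfolding L_def B_def length_word_of_counts by (simp add: zerop_def)
  have rw: "row_word nu zerop T j = L j" for j unfolding T_def using row_word_fill_rows[OF sh] len by blast
  have cL: "cnt v (L j) = Q j v" for j v
    unfolding L_def cnt_word_of_counts B_def using supp by fastforce
  have QTe: "row_content nu T = Q" unfolding row_content_def rw cL by (simp add: fun_eq_iff)
  have z: "\<forall>r. 0 \<notin> set (L r)" using set_word_of_counts unfolding L_def by fastforce
  have srt: "\<forall>r. sorted (L r) \<and> (\<forall>x\<in>set (L r). 1 \<le> x)"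
    using set_word_of_counts sorted_word_of_counts unfolding L_def by fastforce
  have cc: "column_cnt_cond zerop L" using column_cnt_cond_straight_iff[OF z] ct cL by simp
  have TS: "T \<in> SST nu" unfolding SST_def T_def using fill_rows_sst_skew_iff[OF sh len] srt cc by blast
  have ep: "le_lam (eps_vec nu T) al" using eps_vec_le_iff_col_dominant[OF nu al TS] cs QTe by simp
  have wl: "\<forall>j. al j + wt nu T j = la j"
  proof
    fix v
    have "wt nu T v = int (\<Sum>j\<in>{1..nrows nu}. Q j v)" using wt_eq_sum_row_content[of nu T v] QTe by (simp del: of_nat_sum)
    also have "\<dots> = int (nat (la v) - nat (al v))" using cols by (simp del: of_nat_sum)
    also have "\<dots> = la v - al v" using le[rule_format, of v] Par_nonneg[OF al, of v] by simp
    finally show "al v + wt nu T v = la v" by simp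
  qed
  have "T \<in> CLR la al nu" unfolding CLR_def using TS ep wl by blast
  thus ?thesis using QTe by blast
qed

lemma bij_betw_CLR_content_matrices:
  assumes la: "la \<in> Par" and al: "al \<in> Par" and nu: "nu \<in> Par" and le: "\<forall>j. al j \<le> la j"
  shows "bij_betw (row_content nu) (CLR la al nu) (content_matrices la al nu)"
  unfolding bij_betw_def
proof
  show "inj_on (row_content nu) (CLR la al nu)"
    by (rule inj_on_subset[OF inj_on_row_content[OF nu]]) (auto simp: CLR_def)
  show "row_content nu ` CLR la al nu = content_matrices la al nu"
    using row_content_in_content_matrices[OF la al nu le] row_content_onto[OF la al nu le] by blast
qed

section \<open>Littlewood-Richardson tableaux as content matrices\<close>

definition lr_content :: "lam \<Rightarrow> lam \<Rightarrow> tab \<Rightarrow> nat \<Rightarrow> nat \<Rightarrow> nat" where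
  "lr_content la al S j v = cnt j (row_word la al S v)"

definition LR_tableaux :: "lam \<Rightarrow> lam \<Rightarrow> lam \<Rightarrow> tab set" where
  "LR_tableaux la al nu = {S \<in> sst_skew la al. (\<forall>j\<ge>1. int (cnt j (rword la al S)) = nu j)
                               \<and> lattice (rev (rword la al S))}"

lemma lrc_eq_card_LR_tableaux: "\<forall>j. al j \<le> la j \<Longrightarrow> lrc la al nu = card (LR_tableaux la al nu)"
  unfolding lrc_def LR_tableaux_def by simp

lemma column_cnt_cond_iff_col_dominant:
  assumes z: "\<forall>r. 0 \<notin> set (L r)"
  shows "column_cnt_cond al L \<longleftrightarrow> col_dominant al (\<lambda>j v. cnt j (L v))"
proof -
  have "cnt_le v (L r) = (\<Sum>a\<in>{1..v}. cnt a (L r))" for r v using cnt_le_eq_sum_pos z by blast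
  moreover have "cnt_le (v - 1) (L r) = (\<Sum>a\<in>{1..<v}. cnt a (L r))" if "1 \<le> v" for r v
    using cnt_le_eq_sum_pos[of "L r" "v - 1"] z atLeastAtMost_pred[OF that] by simp
  ultimately show ?thesis unfolding column_cnt_cond_def col_dominant_def by simp
qed

lemma lattice_iff_row_dominant:
  assumes srt: "\<forall>r. sorted (L r)" and zb: "\<forall>r>B. L r = []"
  shows "lattice (rev (concat (map L (rev [1..<B+1])))) \<longleftrightarrow> row_dominant (\<lambda>j v. cnt j (L v))"
proof -
  have "suffix_bounded j 0 (concat (map L (rev [1..<B+1]))) \<longleftrightarrow>
     (\<forall>v\<ge>1. int 0 + (\<Sum>v'\<in>{1..v}. int (cnt (Suc j) (L v'))) \<le> int 0 + (\<Sum>v'\<in>{1..<v}. int (cnt j (L v'))))" for j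
  proof -
    have "suffix_bounded j 0 (concat (map L (rev [1..<B+1]))) \<longleftrightarrow>
       (\<forall>v\<in>{1..B}. int 0 + (\<Sum>v'\<in>{1..v}. int (cnt (Suc j) (L v'))) \<le> int 0 + (\<Sum>v'\<in>{1..<v}. int (cnt j (L v'))))"
      using suffix_bounded_concat_sorted[of B L 0 j] srt by simp
    also have "\<dots> \<longleftrightarrow> (\<forall>v\<ge>1. int 0 + (\<Sum>v'\<in>{1..v}. int (cnt (Suc j) (L v'))) \<le> int 0 + (\<Sum>v'\<in>{1..<v}. int (cnt j (L v'))))"
      by (rule partial_sums_bound_beyond) (use zb in auto)
    finally show ?thesis .
  qed
  thus ?thesis unfolding lattice_rev_iff_suffix_bounded row_dominant_def
    by (simp del: of_nat_sum add: of_nat_sum[symmetric])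
qed

lemma LR_tableaux_row_entries:
  assumes la: "la \<in> Par" and al: "al \<in> Par" and nu: "nu \<in> Par" and le: "\<forall>j. al j \<le> la j"
    and S: "S \<in> LR_tableaux la al nu"
  shows "set (row_word la al S v) \<subseteq> {1..nrows nu}"
proof
  fix x assume x: "x \<in> set (row_word la al S v)"
  have sh: "skew_shape la al" unfolding skew_shape_def using la al le by blast
  have "S \<in> sst_skew la al" using S unfolding LR_tableaux_def by blast
  hence "1 \<le> x" using sst_skew_rows[OF sh] x by blast
  moreover have "0 < cnt x (rword la al S)"
    using set_row_word_subset_rword[OF la] x by (auto simp: cnt_count)
  ultimately have "nu x \<noteq> 0" using S unfolding LR_tableaux_def by force
  hence "x \<le> nrows nu" using Lam_zero_beyond_nrows[OF Par_Lam[OF nu]] not_le by blast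
  thus "x \<in> {1..nrows nu}" using \<open>1 \<le> x\<close> by simp
qed

lemma lr_content_in_content_matrices:
  assumes la: "la \<in> Par" and al: "al \<in> Par" and nu: "nu \<in> Par" and le: "\<forall>j. al j \<le> la j"
    and S: "S \<in> LR_tableaux la al nu"
  shows "lr_content la al S \<in> content_matrices la al nu"
proof -
  have S': "S \<in> sst_skew la al" and ct: "\<forall>j\<ge>1. int (cnt j (rword la al S)) = nu j"
    and lat: "lattice (rev (rword la al S))" using S unfolding LR_tableaux_def by auto
  have sh: "skew_shape la al" unfolding skew_shape_def using la al le by blast
  define R where "R = row_word la al S"
  define B where "B = nrows la"
  note entries = LR_tableaux_row_entries[OF la al nu le S, folded R_def]
  have srt: "\<forall>r. sorted (R r)" and pos: "\<forall>r. \<forall>x\<in>set (R r). 1 \<le> x"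
    using sst_skew_rows[OF sh S'] unfolding R_def by blast+
  have zb: "\<forall>r>B. R r = []" using row_word_zero_beyond[OF la] unfolding R_def B_def by blast
  have w: "rword la al S = concat (map R (rev [1..<B+1]))" unfolding R_def B_def by (rule rword_row_word)
  have "\<forall>j v. lr_content la al S j v \<noteq> 0 \<longrightarrow> 1 \<le> j \<and> j \<le> nrows nu \<and> 1 \<le> v \<and> v \<le> nrows la"
  proof (intro allI impI)
    fix j v assume "lr_content la al S j v \<noteq> 0"
    hence j: "j \<in> set (R v)" by (simp add: lr_content_def R_def cnt_count)
    hence "v \<in> {1..nrows la}" using row_word_ne_Nil_range[OF la] unfolding R_def by (metis empty_iff empty_set)
    thus "1 \<le> j \<and> j \<le> nrows nu \<and> 1 \<le> v \<and> v \<le> nrows la" using entries[of v] j by auto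
  qed
  moreover have "\<forall>j. (\<Sum>v\<in>{1..nrows la}. lr_content la al S j v) = nat (nu j)"
  proof
    fix j
    show "(\<Sum>v\<in>{1..nrows la}. lr_content la al S j v) = nat (nu j)"
    proof (cases "j = 0")
      case True
      have "lr_content la al S 0 v = 0" for v
        using pos cnt_zero[of 0 "R v"] unfolding lr_content_def R_def by fastforce
      thus ?thesis using True Lam_at_0[OF Par_Lam[OF nu]] by simp
    next
      case False
      hence "int (cnt j (rword la al S)) = nu j" using ct by simp
      thus ?thesis unfolding w cnt_concat_rows lr_content_def R_def B_def by (simp del: of_nat_sum)
    qed
  qed
  moreover have "\<forall>v. (\<Sum>j\<in>{1..nrows nu}. lr_content la al S j v) = nat (la v) - nat (al v)"
    using length_eq_sum_cnt[OF entries] unfolding lr_content_def R_def length_row_word by simp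
  moreover have "row_dominant (lr_content la al S)"
    using lattice_iff_row_dominant[OF srt zb] lat w unfolding lr_content_def R_def by simp
  moreover have "col_dominant al (lr_content la al S)"
  proof -
    have len: "\<forall>r. length (R r) = nat (la r) - nat (al r)" unfolding R_def length_row_word by simp
    have "fill_rows la al R \<in> sst_skew la al" unfolding R_def using fill_rows_row_word[OF sh S'] S' by simp
    hence "column_cnt_cond al R" using fill_rows_sst_skew_iff[OF sh len] by blast
    moreover have "\<forall>r. 0 \<notin> set (R r)" using pos by fastforce
    ultimately show ?thesis using column_cnt_cond_iff_col_dominant unfolding lr_content_def R_def by blast
  qed
  ultimately show ?thesis unfolding content_matrices_def by blast
qed

lemma inj_on_lr_content: assumes sh: "skew_shape la al" shows "inj_on (lr_content la al) (sst_skew la al)"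
proof
  fix S S' assume s1: "S \<in> sst_skew la al" and s2: "S' \<in> sst_skew la al" and eq: "lr_content la al S = lr_content la al S'"
  have "row_word la al S v = row_word la al S' v" for v
  proof (rule sorted_eq_if_cnt_eq)
    show "sorted (row_word la al S v)" "sorted (row_word la al S' v)" using sst_skew_rows[OF sh] s1 s2 by auto
    show "\<forall>a. cnt a (row_word la al S v) = cnt a (row_word la al S' v)"
      using eq unfolding lr_content_def by metis
  qed
  hence "row_word la al S = row_word la al S'" by blast
  thus "S = S'" using fill_rows_row_word[OF sh s1] fill_rows_row_word[OF sh s2] by metis
qed

lemma lr_content_onto:
  assumes la: "la \<in> Par" and al: "al \<in> Par" and nu: "nu \<in> Par" and le: "\<forall>j. al j \<le> la j"
    and Q: "Q \<in> content_matrices la al nu"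
  shows "\<exists>S\<in>LR_tableaux la al nu. lr_content la al S = Q"
proof -
  define N where "N = nrows nu"
  define B where "B = nrows la"
  define L where "L v = word_of_counts (\<lambda>j. Q j v) N" for v
  define S where "S = fill_rows la al L"
  have sh: "skew_shape la al" unfolding skew_shape_def using la al le by blast
  have supp: "\<forall>j v. Q j v \<noteq> 0 \<longrightarrow> 1 \<le> j \<and> j \<le> nrows nu \<and> 1 \<le> v \<and> v \<le> nrows la"
    and rows: "\<forall>j. (\<Sum>v\<in>{1..nrows la}. Q j v) = nat (nu j)"
    and cols: "\<forall>v. (\<Sum>j\<in>{1..nrows nu}. Q j v) = nat (la v) - nat (al v)"
    and ct: "row_dominant Q" and cs: "col_dominant al Q" using Q unfolding content_matrices_def by auto
  have len: "\<forall>r. length (L r) = nat (la r) - nat (al r)"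
    using cols unfolding L_def N_def length_word_of_counts by simp
  have rw: "row_word la al S v = L v" for v unfolding S_def using row_word_fill_rows[OF sh] len by blast
  have cL: "cnt j (L v) = Q j v" for j v
    unfolding L_def cnt_word_of_counts N_def using supp by fastforce
  have QSe: "lr_content la al S = Q" unfolding lr_content_def rw cL by (simp add: fun_eq_iff)
  have z: "\<forall>r. 0 \<notin> set (L r)" using set_word_of_counts unfolding L_def by fastforce
  have srt0: "\<forall>r. sorted (L r)" using sorted_word_of_counts unfolding L_def by blast
  have srt: "\<forall>r. sorted (L r) \<and> (\<forall>x\<in>set (L r). 1 \<le> x)"
    using set_word_of_counts sorted_word_of_counts unfolding L_def by fastforce
  have cc: "column_cnt_cond al L" using column_cnt_cond_iff_col_dominant[OF z] cs cL by simp
  have S': "S \<in> sst_skew la al" unfolding S_def using fill_rows_sst_skew_iff[OF sh len] srt cc by blast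
  have zb: "\<forall>r>B. L r = []"
  proof (intro allI impI)
    fix r assume "B < r"
    hence "nat (la r) = 0" using Lam_zero_beyond_nrows[OF Par_Lam[OF la]] unfolding B_def by simp
    thus "L r = []" using len[rule_format, of r] by simp
  qed
  have w: "rword la al S = concat (map L (rev [1..<B+1]))" unfolding B_def rword_row_word rw[abs_def] ..
  have lat: "lattice (rev (rword la al S))" unfolding w using lattice_iff_row_dominant[OF srt0 zb] ct cL by simp
  have ctt: "\<forall>j\<ge>1. int (cnt j (rword la al S)) = nu j"
  proof (intro allI impI)
    fix j :: nat assume "1 \<le> j"
    have "cnt j (rword la al S) = (\<Sum>v\<in>{1..B}. Q j v)" unfolding w cnt_concat_rows cL ..
    also have "\<dots> = nat (nu j)" using rows unfolding B_def by blast
    finally show "int (cnt j (rword la al S)) = nu j" using Par_nonneg[OF nu, of j] by simp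
  qed
  have "S \<in> LR_tableaux la al nu" unfolding LR_tableaux_def using S' ctt lat by blast
  thus ?thesis using QSe by blast
qed

lemma bij_betw_LR_tableaux_content_matrices:
  assumes la: "la \<in> Par" and al: "al \<in> Par" and nu: "nu \<in> Par" and le: "\<forall>j. al j \<le> la j"
  shows "bij_betw (lr_content la al) (LR_tableaux la al nu) (content_matrices la al nu)"
  unfolding bij_betw_def
proof
  have sh: "skew_shape la al" unfolding skew_shape_def using la al le by blast
  show "inj_on (lr_content la al) (LR_tableaux la al nu)"
    by (rule inj_on_subset[OF inj_on_lr_content[OF sh]]) (auto simp: LR_tableaux_def)
  show "lr_content la al ` LR_tableaux la al nu = content_matrices la al nu"
    using lr_content_in_content_matrices[OF la al nu le] lr_content_onto[OF la al nu le] by blast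
qed

lemma CLR_mem_le: "T \<in> CLR la al nu \<Longrightarrow> al j \<le> la j"
  unfolding CLR_def wt_def by (metis (mono_tags, lifting) mem_Collect_eq le_add_same_cancel1 of_nat_0_le_iff)

theorem card_CLR:
  assumes la: "la \<in> Par" and al: "al \<in> Par" and nu: "nu \<in> Par"
  shows "card (CLR la al nu) = lrc la al nu"
proof (cases "\<forall>j. al j \<le> la j")
  case True
  have "card (CLR la al nu) = card (content_matrices la al nu)" using bij_betw_CLR_content_matrices[OF la al nu True] by (rule bij_betw_same_card)
  also have "\<dots> = card (LR_tableaux la al nu)" using bij_betw_LR_tableaux_content_matrices[OF la al nu True] by (rule bij_betw_same_card[symmetric])
  finally show ?thesis using lrc_eq_card_LR_tableaux[OF True] by simp
next
  case False
  hence "CLR la al nu = {}" using CLR_mem_le by blast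
  moreover have "lrc la al nu = 0" unfolding lrc_def using False by (rule if_not_P)
  ultimately show ?thesis by simp
qed

lemma finite_bounded_matrices: "finite {Q :: nat \<Rightarrow> nat \<Rightarrow> nat. \<forall>j v. Q j v \<le> C \<and> (Q j v \<noteq> 0 \<longrightarrow> j \<le> N \<and> v \<le> B)}"
proof (rule finite_subset)
  let ?f = "\<lambda>g :: nat \<times> nat \<Rightarrow> nat. \<lambda>j v. if j \<le> N \<and> v \<le> B then g (j, v) else 0"
  show "{Q :: nat \<Rightarrow> nat \<Rightarrow> nat. \<forall>j v. Q j v \<le> C \<and> (Q j v \<noteq> 0 \<longrightarrow> j \<le> N \<and> v \<le> B)}
        \<subseteq> ?f ` (({0..N} \<times> {0..B}) \<rightarrow>\<^sub>E {0..C})"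
  proof
    fix Q :: "nat \<Rightarrow> nat \<Rightarrow> nat"
    assume Q: "Q \<in> {Q. \<forall>j v. Q j v \<le> C \<and> (Q j v \<noteq> 0 \<longrightarrow> j \<le> N \<and> v \<le> B)}"
    have "Q = ?f (restrict (case_prod Q) ({0..N} \<times> {0..B}))"
    proof (intro ext)
      fix j v
      show "Q j v = ?f (restrict (case_prod Q) ({0..N} \<times> {0..B})) j v"
        using Q by (cases "j \<le> N \<and> v \<le> B") auto
    qed
    moreover have "restrict (case_prod Q) ({0..N} \<times> {0..B}) \<in> ({0..N} \<times> {0..B}) \<rightarrow>\<^sub>E {0..C}"
      using Q by auto
    ultimately show "Q \<in> ?f ` (({0..N} \<times> {0..B}) \<rightarrow>\<^sub>E {0..C})" by blast
  qed
  show "finite (?f ` (({0..N} \<times> {0..B}) \<rightarrow>\<^sub>E {0..C}))" by (intro finite_imageI finite_PiE) auto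
qed

lemma finite_content_matrices: "finite (content_matrices la al nu)"
proof (rule finite_subset[OF _ finite_bounded_matrices[of "\<Sum>j\<in>{0..nrows nu}. nat (nu j)" "nrows nu" "nrows la"]])
  show "content_matrices la al nu \<subseteq> {Q. \<forall>j v. Q j v \<le> (\<Sum>j\<in>{0..nrows nu}. nat (nu j)) \<and> (Q j v \<noteq> 0 \<longrightarrow> j \<le> nrows nu \<and> v \<le> nrows la)}"
  proof
    fix Q assume Q: "Q \<in> content_matrices la al nu"
    have supp: "\<forall>j v. Q j v \<noteq> 0 \<longrightarrow> 1 \<le> j \<and> j \<le> nrows nu \<and> 1 \<le> v \<and> v \<le> nrows la"
      and rows: "\<forall>j. (\<Sum>v\<in>{1..nrows la}. Q j v) = nat (nu j)" using Q unfolding content_matrices_def by auto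
    have "Q j v \<le> (\<Sum>j\<in>{0..nrows nu}. nat (nu j))" for j v
    proof (cases "Q j v = 0")
      case False
      hence jv: "1 \<le> j" "j \<le> nrows nu" "1 \<le> v" "v \<le> nrows la" using supp by auto
      have "Q j v \<le> (\<Sum>v\<in>{1..nrows la}. Q j v)" by (rule member_le_sum) (use jv in auto)
      also have "\<dots> = nat (nu j)" using rows by blast
      also have "\<dots> \<le> (\<Sum>j\<in>{0..nrows nu}. nat (nu j))" by (rule member_le_sum) (use jv in auto)
      finally show ?thesis .
    qed simp
    thus "Q \<in> {Q. \<forall>j v. Q j v \<le> (\<Sum>j\<in>{0..nrows nu}. nat (nu j)) \<and> (Q j v \<noteq> 0 \<longrightarrow> j \<le> nrows nu \<and> v \<le> nrows la)}"
      using supp by blast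
  qed
qed

lemma finite_CLR:
  assumes la: "la \<in> Par" and al: "al \<in> Par" and nu: "nu \<in> Par"
  shows "finite (CLR la al nu)"
proof (cases "\<forall>j. al j \<le> la j")
  case True thus ?thesis using bij_betw_finite[OF bij_betw_CLR_content_matrices[OF la al nu True]] finite_content_matrices by blast
next
  case False
  hence "CLR la al nu = {}" using CLR_mem_le by blast
  thus ?thesis by simp
qed

section \<open>Partitions and the Euler factor\<close>

lemma psize_eq_sum:
  assumes "x 0 = 0" "\<forall>j>M. x j = 0"
  shows "psize x = (\<Sum>j\<in>{1..M}. x j)"
  unfolding psize_def
proof (rule sum.mono_neutral_left)
  show "finite {1..M}" by simp
  show "{j. x j \<noteq> 0} \<subseteq> {1..M}" using assms by (auto simp: not_less[symmetric]) (metis neq0_conv)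
qed auto

lemma Par_le_psize:
  assumes p: "x \<in> Par" and j: "1 \<le> j"
  shows "x j \<le> psize x" "int j * x j \<le> psize x"
proof -
  define M where "M = max j (nrows x)"
  have ps: "psize x = (\<Sum>i\<in>{1..M}. x i)"
    using psize_eq_sum[of x M] Lam_at_0[OF Par_Lam[OF p]] Lam_zero_beyond_nrows[OF Par_Lam[OF p]] unfolding M_def by auto
  have nn: "0 \<le> x i" for i using Par_nonneg[OF p] .
  have "(\<Sum>i\<in>{1..j}. x j) \<le> (\<Sum>i\<in>{1..j}. x i)"
    by (rule sum_mono) (use Par_antimono[OF p] in auto)
  also have "\<dots> \<le> (\<Sum>i\<in>{1..M}. x i)" by (rule sum_mono2) (use nn M_def in auto)
  finally show "int j * x j \<le> psize x" using ps by simp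
  moreover have "x j \<le> int j * x j" using j nn[of j] by (simp add: mult_le_cancel_right1)
  ultimately show "x j \<le> psize x" by linarith
qed

lemma psize_nonneg: "x \<in> Par \<Longrightarrow> 0 \<le> psize x"
  unfolding psize_def using Par_nonneg by (simp add: sum_nonneg)

lemma finite_bounded_lam: "finite {x :: lam. \<forall>j. 0 \<le> x j \<and> x j \<le> int C \<and> (x j \<noteq> 0 \<longrightarrow> j \<le> N)}"
proof (rule finite_subset)
  let ?f = "\<lambda>g :: nat \<Rightarrow> int. \<lambda>j. if j \<le> N then g j else 0"
  show "{x :: lam. \<forall>j. 0 \<le> x j \<and> x j \<le> int C \<and> (x j \<noteq> 0 \<longrightarrow> j \<le> N)} \<subseteq> ?f ` ({0..N} \<rightarrow>\<^sub>E {0..int C})"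
  proof
    fix x :: lam assume x: "x \<in> {x. \<forall>j. 0 \<le> x j \<and> x j \<le> int C \<and> (x j \<noteq> 0 \<longrightarrow> j \<le> N)}"
    have "x = ?f (restrict x {0..N})" using x by (auto simp: fun_eq_iff)
    moreover have "restrict x {0..N} \<in> {0..N} \<rightarrow>\<^sub>E {0..int C}" using x by auto
    ultimately show "x \<in> ?f ` ({0..N} \<rightarrow>\<^sub>E {0..int C})" by blast
  qed
  show "finite (?f ` ({0..N} \<rightarrow>\<^sub>E {0..int C}))" by (intro finite_imageI finite_PiE) auto
qed

lemma finite_Par_psize_le: "finite {x \<in> Par. psize x \<le> int n}"
proof (rule finite_subset[OF _ finite_bounded_lam[of n n]])
  show "{x \<in> Par. psize x \<le> int n} \<subseteq> {x :: lam. \<forall>j. 0 \<le> x j \<and> x j \<le> int n \<and> (x j \<noteq> 0 \<longrightarrow> j \<le> n)}"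
  proof
    fix x assume x: "x \<in> {x \<in> Par. psize x \<le> int n}"
    hence p: "x \<in> Par" and ps: "psize x \<le> int n" by auto
    have "0 \<le> x j \<and> x j \<le> int n \<and> (x j \<noteq> 0 \<longrightarrow> j \<le> n)" for j
    proof (cases "j = 0")
      case True thus ?thesis using Lam_at_0[OF Par_Lam[OF p]] by simp
    next
      case False
      hence j: "1 \<le> j" by simp
      have a: "0 \<le> x j" using Par_nonneg[OF p] .
      have b: "x j \<le> int n" using Par_le_psize(1)[OF p j] ps by linarith
      have "j \<le> n" if "x j \<noteq> 0"
      proof -
        have "1 \<le> x j" using a that by linarith
        hence "int j \<le> int j * x j" by (simp add: mult_le_cancel_left1)
        thus ?thesis using Par_le_psize(2)[OF p j] ps by linarith
      qed
      thus ?thesis using a b by blast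
    qed
    thus "x \<in> {x :: lam. \<forall>j. 0 \<le> x j \<and> x j \<le> int n \<and> (x j \<noteq> 0 \<longrightarrow> j \<le> n)}" by blast
  qed
qed

definition drop_first_part :: "lam \<Rightarrow> lam" where "drop_first_part x j = (if j = 0 then 0 else x (Suc j))"
definition add_first_part :: "int \<Rightarrow> lam \<Rightarrow> lam" where
  "add_first_part a x j = (if j = 0 then 0 else if j = 1 then a else x (j - 1))"

definition bounded_partitions :: "nat \<Rightarrow> nat \<Rightarrow> lam set" where
  "bounded_partitions N s = {x \<in> Par. x 1 \<le> int N \<and> psize x = int s}"

lemma drop_first_part_Par: assumes p: "x \<in> Par" shows "drop_first_part x \<in> Par"
proof -
  have L: "x \<in> Lam" using Par_Lam[OF p] .
  have sub: "{j. drop_first_part x j \<noteq> 0} \<subseteq> {..nrows x}"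
  proof
    fix j assume "j \<in> {j. drop_first_part x j \<noteq> 0}"
    hence "x (Suc j) \<noteq> 0" unfolding drop_first_part_def by (auto split: if_splits)
    hence "\<not> nrows x < Suc j" using Lam_zero_beyond_nrows[OF L] by blast
    thus "j \<in> {..nrows x}" by simp
  qed
  have "finite {j. drop_first_part x j \<noteq> 0}" using sub by (rule finite_subset) simp
  moreover have "drop_first_part x 0 = 0" by (simp add: drop_first_part_def)
  ultimately have "drop_first_part x \<in> Lam" unfolding Lam_def by blast
  moreover have "\<forall>i\<ge>1. oc (drop_first_part x) i \<ge> 0" using p unfolding Par_def oc_def drop_first_part_def by auto
  ultimately show ?thesis unfolding Par_def by blast
qed

lemma add_first_part_Par: assumes p: "x \<in> Par" and a: "x 1 \<le> a" shows "add_first_part a x \<in> Par"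
proof -
  have L: "x \<in> Lam" using Par_Lam[OF p] .
  have sub: "{j. add_first_part a x j \<noteq> 0} \<subseteq> {..Suc (nrows x)}"
  proof
    fix j assume j: "j \<in> {j. add_first_part a x j \<noteq> 0}"
    show "j \<in> {..Suc (nrows x)}"
    proof (cases "j \<le> 1")
      case True thus ?thesis by simp
    next
      case False
      hence "x (j - 1) \<noteq> 0" using j unfolding add_first_part_def by auto
      hence "\<not> nrows x < j - 1" using Lam_zero_beyond_nrows[OF L] by blast
      thus ?thesis by simp
    qed
  qed
  have "finite {j. add_first_part a x j \<noteq> 0}" using sub by (rule finite_subset) simp
  moreover have "add_first_part a x 0 = 0" by (simp add: add_first_part_def)
  ultimately have "add_first_part a x \<in> Lam" unfolding Lam_def by blast
  moreover have "oc (add_first_part a x) i \<ge> 0" if i: "i \<ge> 1" for i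
  proof (cases "i = 1")
    case True thus ?thesis using a unfolding oc_def add_first_part_def by simp
  next
    case False
    hence "oc (add_first_part a x) i = oc x (i - 1)" unfolding oc_def add_first_part_def using i by auto
    thus ?thesis using p False i unfolding Par_def by auto
  qed
  ultimately show ?thesis unfolding Par_def by blast
qed

lemma psize_drop_first_part: assumes p: "x \<in> Par" shows "psize (drop_first_part x) = psize x - x 1"
proof -
  define M where "M = nrows x"
  have L: "x \<in> Lam" using Par_Lam[OF p] .
  have z: "\<forall>j>M. x j = 0" using Lam_zero_beyond_nrows[OF L] unfolding M_def by blast
  have "psize x = (\<Sum>j\<in>{1..Suc M}. x j)" by (rule psize_eq_sum) (use z Lam_at_0[OF L] in auto)
  also have "\<dots> = x 1 + (\<Sum>j\<in>{Suc 1..Suc M}. x j)" by (simp add: sum.atLeast_Suc_atMost)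
  also have "(\<Sum>j\<in>{Suc 1..Suc M}. x j) = (\<Sum>j\<in>{1..M}. x (Suc j))" by (rule sum.shift_bounds_cl_Suc_ivl)
  finally have a: "psize x = x 1 + (\<Sum>j\<in>{1..M}. x (Suc j))" .
  have "psize (drop_first_part x) = (\<Sum>j\<in>{1..M}. drop_first_part x j)" by (rule psize_eq_sum) (use z in \<open>auto simp: drop_first_part_def\<close>)
  also have "\<dots> = (\<Sum>j\<in>{1..M}. x (Suc j))" by (rule sum.cong) (auto simp: drop_first_part_def)
  finally show ?thesis using a by simp
qed

lemma psize_add_first_part: assumes L: "x \<in> Lam" shows "psize (add_first_part a x) = psize x + a"
proof -
  define M where "M = nrows x"
  have z: "\<forall>j>M. x j = 0" using Lam_zero_beyond_nrows[OF L] unfolding M_def by blast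
  have "psize (add_first_part a x) = (\<Sum>j\<in>{1..Suc M}. add_first_part a x j)" by (rule psize_eq_sum) (use z in \<open>auto simp: add_first_part_def\<close>)
  also have "\<dots> = add_first_part a x 1 + (\<Sum>j\<in>{Suc 1..Suc M}. add_first_part a x j)" by (simp add: sum.atLeast_Suc_atMost)
  also have "(\<Sum>j\<in>{Suc 1..Suc M}. add_first_part a x j) = (\<Sum>j\<in>{1..M}. add_first_part a x (Suc j))" by (rule sum.shift_bounds_cl_Suc_ivl)
  also have "\<dots> = (\<Sum>j\<in>{1..M}. x j)" by (rule sum.cong) (auto simp: add_first_part_def)
  also have "\<dots> = psize x" by (rule psize_eq_sum[symmetric]) (use z Lam_at_0[OF L] in auto)
  finally have "psize (add_first_part a x) = add_first_part a x 1 + psize x" .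
  moreover have "add_first_part a x 1 = a" by (simp add: add_first_part_def)
  ultimately show ?thesis by simp
qed

lemma drop_add_first_part: "x \<in> Lam \<Longrightarrow> drop_first_part (add_first_part a x) = x"
  unfolding drop_first_part_def add_first_part_def using Lam_at_0 by (auto simp: fun_eq_iff)

lemma add_drop_first_part: "x \<in> Lam \<Longrightarrow> add_first_part (x 1) (drop_first_part x) = x"
  unfolding drop_first_part_def add_first_part_def using Lam_at_0 by (auto simp: fun_eq_iff)

lemma finite_bounded_partitions: "finite (bounded_partitions N s)"
  by (rule finite_subset[OF _ finite_Par_psize_le[of s]]) (auto simp: bounded_partitions_def)

lemma bounded_partitions_0: "bounded_partitions 0 s = (if s = 0 then {zerop} else {})"
proof -
  have "x = zerop" if p: "x \<in> Par" and x1: "x 1 \<le> 0" for x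
  proof
    fix j show "x j = zerop j"
    proof (cases "j = 0")
      case True thus ?thesis using Lam_at_0[OF Par_Lam[OF p]] by (simp add: zerop_def)
    next
      case False
      hence "x j \<le> x 1" using Par_antimono[OF p, of 1 j] by simp
      thus ?thesis using x1 Par_nonneg[OF p, of j] by (simp add: zerop_def)
    qed
  qed
  hence z: "x \<in> bounded_partitions 0 s \<Longrightarrow> x = zerop" for x unfolding bounded_partitions_def by simp
  have pz: "psize zerop = 0" by (simp add: psize_def zerop_def)
  show ?thesis
  proof (cases "s = 0")
    case True
    have "zerop \<in> bounded_partitions 0 s" unfolding bounded_partitions_def using zerop_Par pz True by (simp add: zerop_def)
    hence "bounded_partitions 0 s = {zerop}" using z by blast
    thus ?thesis using True by simp
  next
    case False
    have "bounded_partitions 0 s = {}" using z pz False unfolding bounded_partitions_def by fastforce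
    thus ?thesis using False by simp
  qed
qed

lemma bij_betw_drop_first_part:
  assumes "N \<le> s"
  shows "bij_betw drop_first_part {x \<in> Par. x 1 = int N \<and> psize x = int s} (bounded_partitions N (s - N))"
proof (rule bij_betw_byWitness[where f' = "add_first_part (int N)"])
  show "\<forall>x\<in>{x \<in> Par. x 1 = int N \<and> psize x = int s}. add_first_part (int N) (drop_first_part x) = x"
    using add_drop_first_part Par_Lam by fastforce
  show "\<forall>z\<in>bounded_partitions N (s - N). drop_first_part (add_first_part (int N) z) = z"
    using drop_add_first_part Par_Lam unfolding bounded_partitions_def by blast
  show "drop_first_part ` {x \<in> Par. x 1 = int N \<and> psize x = int s} \<subseteq> bounded_partitions N (s - N)"
  proof (rule image_subsetI)
    fix x assume "x \<in> {x \<in> Par. x 1 = int N \<and> psize x = int s}"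
    hence p: "x \<in> Par" and x1: "x 1 = int N" and ps: "psize x = int s" by auto
    show "drop_first_part x \<in> bounded_partitions N (s - N)"
      unfolding bounded_partitions_def
      using drop_first_part_Par[OF p] Par_Suc_le[OF p, of 1] psize_drop_first_part[OF p] x1 ps assms
      by (simp add: drop_first_part_def)
  qed
  show "add_first_part (int N) ` bounded_partitions N (s - N) \<subseteq> {x \<in> Par. x 1 = int N \<and> psize x = int s}"
  proof (rule image_subsetI)
    fix z assume "z \<in> bounded_partitions N (s - N)"
    hence p: "z \<in> Par" and z1: "z 1 \<le> int N" and ps: "psize z = int (s - N)"
      unfolding bounded_partitions_def by auto
    show "add_first_part (int N) z \<in> {x \<in> Par. x 1 = int N \<and> psize x = int s}"
      using add_first_part_Par[OF p z1] psize_add_first_part[OF Par_Lam[OF p]] ps assms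
      by (simp add: add_first_part_def)
  qed
qed

lemma card_bounded_partitions_rec:
  assumes N: "1 \<le> N"
  shows "card (bounded_partitions N s) =
    card (bounded_partitions (N - 1) s) + (if N \<le> s then card (bounded_partitions N (s - N)) else 0)"
proof -
  define A where "A = {x \<in> Par. x 1 = int N \<and> psize x = int s}"
  have un: "bounded_partitions N s = bounded_partitions (N - 1) s \<union> A"
    and dis: "bounded_partitions (N - 1) s \<inter> A = {}"
    using N unfolding bounded_partitions_def A_def by auto
  have fin: "finite A" using un finite_bounded_partitions[of N s] by (metis finite_Un)
  have "card A = (if N \<le> s then card (bounded_partitions N (s - N)) else 0)"
  proof (cases "N \<le> s")
    case True
    thus ?thesis using bij_betw_same_card[OF bij_betw_drop_first_part[OF True]] unfolding A_def by simp
  next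
    case False
    have "A = {}" using Par_le_psize(1)[of _ 1] False unfolding A_def by fastforce
    thus ?thesis using False by simp
  qed
  moreover have "card (bounded_partitions N s) = card (bounded_partitions (N - 1) s) + card A"
    unfolding un by (rule card_Un_disjoint) (use finite_bounded_partitions fin dis in auto)
  ultimately show ?thesis by simp
qed

definition gf_bounded_partitions :: "nat \<Rightarrow> nat \<Rightarrow> int fps" where
  "gf_bounded_partitions k N = Abs_fps (\<lambda>t. if k dvd t then int (card (bounded_partitions N (t div k))) else 0)"

definition gf_partitions :: "nat \<Rightarrow> int fps" where
  "gf_partitions k = Abs_fps (\<lambda>t. if k dvd t then int (card {x\<in>Par. psize x = int (t div k)}) else 0)"

definition euler_prod :: "nat \<Rightarrow> nat \<Rightarrow> int fps" where
  "euler_prod k N = (\<Prod>a\<in>{1..N}. (1 - fps_X ^ (k * a)))"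

lemma gf_bounded_partitions_rec:
  assumes k: "1 \<le> k" and N: "1 \<le> N"
  shows "gf_bounded_partitions k N = gf_bounded_partitions k (N - 1) + fps_X ^ (k * N) * gf_bounded_partitions k N"
proof (rule fps_ext)
  fix t
  show "fps_nth (gf_bounded_partitions k N) t = fps_nth (gf_bounded_partitions k (N - 1) + fps_X ^ (k * N) * gf_bounded_partitions k N) t"
  proof (cases "k dvd t")
    case True
    then obtain s where t: "t = k * s" by blast
    have ts: "t div k = s" using t k by simp
    show ?thesis
    proof (cases "t < k * N")
      case True
      have "\<not> N \<le> s"
      proof
        assume "N \<le> s" hence "k * N \<le> k * s" by (rule mult_le_mono2)
        thus False using True t by simp
      qed
      thus ?thesis using True card_bounded_partitions_rec[OF N, of s] ts \<open>k dvd t\<close> unfolding gf_bounded_partitions_def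
        by (simp add: fps_X_power_mult_nth)
    next
      case False
      hence Ns: "N \<le> s" using t k by (simp add: not_less mult_le_cancel1)
      have "t - k * N = k * (s - N)" using t by (simp add: diff_mult_distrib2)
      hence d: "k dvd (t - k * N)" "(t - k * N) div k = s - N" using k by auto
      show ?thesis using False card_bounded_partitions_rec[OF N, of s] ts \<open>k dvd t\<close> d Ns unfolding gf_bounded_partitions_def
        by (simp add: fps_X_power_mult_nth)
    qed
  next
    case False
    have "\<not> k dvd (t - k * N)" if "\<not> t < k * N"
    proof
      assume "k dvd (t - k * N)"
      hence "k dvd (t - k * N + k * N)" by simp
      thus False using False that by simp
    qed
    thus ?thesis using False unfolding gf_bounded_partitions_def by (simp add: fps_X_power_mult_nth)
  qed
qed

lemma gf_bounded_partitions_0: assumes k: "1 \<le> k" shows "gf_bounded_partitions k 0 = 1"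
proof (rule fps_ext)
  fix t
  show "fps_nth (gf_bounded_partitions k 0) t = fps_nth 1 t"
  proof (cases "k dvd t")
    case True
    then obtain s where t: "t = k * s" by blast
    have "t div k = s" using t k by simp
    moreover have "s = 0 \<longleftrightarrow> t = 0" using t k by simp
    ultimately show ?thesis using True unfolding gf_bounded_partitions_def bounded_partitions_0 by simp
  next
    case False
    hence "t \<noteq> 0" by (metis dvd_0_right)
    thus ?thesis using False unfolding gf_bounded_partitions_def by simp
  qed
qed

lemma euler_prod_gf_bounded_partitions: assumes k: "1 \<le> k" shows "euler_prod k N * gf_bounded_partitions k N = 1"
proof (induction N)
  case 0 thus ?case using gf_bounded_partitions_0[OF k] by (simp add: euler_prod_def)
next
  case (Suc N)
  have "euler_prod k (Suc N) = euler_prod k N * (1 - fps_X ^ (k * Suc N))"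
    unfolding euler_prod_def by (simp add: atLeastAtMostSuc_conv mult.commute)
  moreover have "(1 - fps_X ^ (k * Suc N)) * gf_bounded_partitions k (Suc N) = gf_bounded_partitions k N"
    using gf_bounded_partitions_rec[OF k, of "Suc N"] by (simp add: algebra_simps)
  ultimately show ?case using Suc by (simp add: mult.assoc)
qed

lemma fps_nth_gf_bounded_partitions: assumes k: "1 \<le> k" and t: "t \<le> N" shows "fps_nth (gf_bounded_partitions k N) t = fps_nth (gf_partitions k) t"
proof -
  have s: "t div k \<le> N" using t k by (meson div_le_dividend le_trans)
  have "bounded_partitions N (t div k) = {x\<in>Par. psize x = int (t div k)}"
  proof (rule set_eqI)
    fix x :: lam
    have "x \<in> Par \<Longrightarrow> psize x = int (t div k) \<Longrightarrow> x 1 \<le> int N"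
      using Par_le_psize(1)[of x 1] s by simp
    thus "x \<in> bounded_partitions N (t div k) \<longleftrightarrow> x \<in> {x\<in>Par. psize x = int (t div k)}" unfolding bounded_partitions_def by blast
  qed
  thus ?thesis unfolding gf_bounded_partitions_def gf_partitions_def by simp
qed

lemma mult_one_minus_X_nth: "i < m \<Longrightarrow> fps_nth (f * (1 - fps_X ^ m)) i = fps_nth (f :: int fps) i"
proof -
  assume i: "i < m"
  have "f * (1 - fps_X ^ m) = f - fps_X ^ m * f" by (simp add: algebra_simps)
  thus ?thesis using i by (simp add: fps_X_power_mult_nth)
qed

lemma fps_nth_euler_factor: assumes k: "1 \<le> k" and i: "i \<le> N" shows "fps_nth (euler_factor k) i = fps_nth (euler_prod k N) i"
  using i
proof (induction N rule: dec_induct)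
  case base thus ?case unfolding euler_factor_def euler_prod_def by simp
next
  case (step N)
  have "euler_prod k (Suc N) = euler_prod k N * (1 - fps_X ^ (k * Suc N))"
    unfolding euler_prod_def by (simp add: atLeastAtMostSuc_conv mult.commute)
  moreover have "i < k * Suc N" using step k by (metis le_imp_less_Suc less_le_trans mult_le_mono1 mult_1)
  ultimately show ?case using step mult_one_minus_X_nth by simp
qed

lemma euler_factor_gf_partitions: assumes k: "1 \<le> k" shows "euler_factor k * gf_partitions k = 1"
proof (rule fps_ext)
  fix n
  have "fps_nth (euler_factor k * gf_partitions k) n = (\<Sum>i=0..n. fps_nth (euler_factor k) i * fps_nth (gf_partitions k) (n - i))"
    by (rule fps_mult_nth)
  also have "\<dots> = (\<Sum>i=0..n. fps_nth (euler_prod k n) i * fps_nth (gf_bounded_partitions k n) (n - i))"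
    by (rule sum.cong) (use fps_nth_euler_factor[OF k] fps_nth_gf_bounded_partitions[OF k] in auto)
  also have "\<dots> = fps_nth (euler_prod k n * gf_bounded_partitions k n) n" by (rule fps_mult_nth[symmetric])
  finally show "fps_nth (euler_factor k * gf_partitions k) n = fps_nth 1 n" using euler_prod_gf_bounded_partitions[OF k] by simp
qed

definition fin_supp :: "lam \<Rightarrow> bool" where "fin_supp f \<longleftrightarrow> finite {j. f j \<noteq> 0}"

lemma fin_supp_add: "fin_supp f \<Longrightarrow> fin_supp g \<Longrightarrow> fin_supp (\<lambda>j. f j + g j)"
  unfolding fin_supp_def by (rule finite_subset[of _ "{j. f j \<noteq> 0} \<union> {j. g j \<noteq> 0}"]) auto

lemma fin_supp_diff: "fin_supp f \<Longrightarrow> fin_supp g \<Longrightarrow> fin_supp (\<lambda>j. f j - g j)"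
  unfolding fin_supp_def by (rule finite_subset[of _ "{j. f j \<noteq> 0} \<union> {j. g j \<noteq> 0}"]) auto

lemma fin_supp_sum: "finite A \<Longrightarrow> (\<forall>m\<in>A. fin_supp (F m)) \<Longrightarrow> fin_supp (\<lambda>j. \<Sum>m\<in>A. F m j)"
proof (induction A rule: finite_induct)
  case empty thus ?case by (simp add: fin_supp_def)
next
  case (insert x A)
  have "fin_supp (\<lambda>j. F x j + (\<Sum>m\<in>A. F m j))" using insert by (intro fin_supp_add) auto
  thus ?case using insert by simp
qed

lemma Lam_iff_fin_supp: "x \<in> Lam \<longleftrightarrow> x 0 = 0 \<and> fin_supp x" unfolding Lam_def fin_supp_def by simp

lemma fin_supp_bound: "fin_supp f \<Longrightarrow> \<exists>M. \<forall>j>M. f j = 0"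
proof -
  assume "fin_supp f"
  hence fin: "finite {j. f j \<noteq> 0}" unfolding fin_supp_def .
  have "\<forall>j>Max (insert 0 {j. f j \<noteq> 0}). f j = 0"
  proof (intro allI impI)
    fix j assume j: "Max (insert 0 {j. f j \<noteq> 0}) < j"
    show "f j = 0"
    proof (rule ccontr)
      assume "f j \<noteq> 0"
      hence "j \<le> Max (insert 0 {j. f j \<noteq> 0})" using fin by (intro Max_ge) auto
      thus False using j by simp
    qed
  qed
  thus ?thesis by blast
qed

lemma fin_supp_if_bound: "\<forall>j>M. f j = 0 \<Longrightarrow> fin_supp f"
  unfolding fin_supp_def by (rule finite_subset[of _ "{..M}"]) (auto simp: not_less[symmetric])

lemma fin_supp_wt: "fin_supp (wt nu T)"
proof -
  have "{j. wt nu T j \<noteq> 0} \<subseteq> set (rword nu zerop T)"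
  proof
    fix j assume "j \<in> {j. wt nu T j \<noteq> 0}"
    hence "cnt j (rword nu zerop T) \<noteq> 0" unfolding wt_def by simp
    thus "j \<in> set (rword nu zerop T)" by (simp add: cnt_count)
  qed
  thus ?thesis unfolding fin_supp_def by (rule finite_subset) simp
qed

lemma wt_at_0: "T \<in> SST nu \<Longrightarrow> nu \<in> Par \<Longrightarrow> wt nu T 0 = 0"
proof -
  assume T: "T \<in> SST nu" and nu: "nu \<in> Par"
  have sh: "skew_shape nu zerop" by (rule skew_shape_straight[OF nu])
  have "0 \<notin> set (row_word nu zerop T r)" for r using sst_skew_rows[OF sh, of T r] T unfolding SST_def by auto
  hence "0 \<notin> set (rword nu zerop T)" unfolding rword_row_word by auto
  hence "cnt 0 (rword nu zerop T) = 0" by (rule cnt_zero)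
  thus ?thesis unfolding wt_def by simp
qed

lemma fin_supp_eps_vec: "fin_supp (eps_vec nu T)"
proof -
  define w where "w = rword nu zerop T"
  define c where "c = (\<lambda>i. if i = 0 then 0 else int (epsi nu i T))"
  have "\<forall>i\<ge>Suc (Max (insert 0 (set w))). c i = 0"
  proof (intro allI impI)
    fix i assume i: "Suc (Max (insert 0 (set w))) \<le> i"
    show "c i = 0"
    proof (rule ccontr)
      assume "c i \<noteq> 0"
      hence "0 < max_excess i w" unfolding c_def w_def epsi_eq_max_excess by (auto split: if_splits)
      hence "Suc i \<in> set w" by (rule max_excess_pos_mem)
      hence "Suc i \<le> Max (insert 0 (set w))" by (intro Max_ge) auto
      thus False using i by simp
    qed
  qed
  hence "\<forall>j>Suc (Max (insert 0 (set w))). eps_vec nu T j = 0"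
    unfolding eps_vec_def c_def[symmetric] using from_omega_zero_beyond by (metis less_imp_le)
  thus ?thesis by (rule fin_supp_if_bound)
qed

lemma epsi_plus_oc_wt_nonneg: "1 \<le> i \<Longrightarrow> 0 \<le> int (epsi nu i T) + oc (wt nu T) i"
proof -
  assume i: "1 \<le> i"
  define w where "w = rword nu zerop T"
  have "excess i w 0 \<le> max_excess i w" by (rule excess_le_max_excess) simp
  moreover have "excess i w 0 = wt nu T (Suc i) - wt nu T i" unfolding excess_def w_def wt_def by simp
  moreover have "int (epsi nu i T) = max_excess i w" unfolding epsi_eq_max_excess w_def using max_excess_nonneg by simp
  ultimately show ?thesis unfolding oc_def by simp
qed

lemma psize_add:
  assumes x: "x \<in> Lam" and y: "y \<in> Lam"
  shows "psize (\<lambda>j. x j + y j) = psize x + psize y"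
proof -
  define M where "M = max (nrows x) (nrows y)"
  have zx: "\<forall>j>M. x j = 0" and zy: "\<forall>j>M. y j = 0" using Lam_zero_beyond_nrows[OF x] Lam_zero_beyond_nrows[OF y] unfolding M_def by auto
  have "psize (\<lambda>j. x j + y j) = (\<Sum>j\<in>{1..M}. x j + y j)" by (rule psize_eq_sum) (use zx zy Lam_at_0[OF x] Lam_at_0[OF y] in auto)
  also have "\<dots> = (\<Sum>j\<in>{1..M}. x j) + (\<Sum>j\<in>{1..M}. y j)" by (rule sum.distrib)
  also have "\<dots> = psize x + psize y"
    using psize_eq_sum[of x M] psize_eq_sum[of y M] zx zy Lam_at_0[OF x] Lam_at_0[OF y] by simp
  finally show ?thesis .
qed

lemma psize_mono:
  assumes x: "x \<in> Par" and y: "y \<in> Lam" and le: "\<forall>j. x j \<le> y j"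
  shows "psize x \<le> psize y"
proof -
  define M where "M = max (nrows x) (nrows y)"
  have zx: "\<forall>j>M. x j = 0" and zy: "\<forall>j>M. y j = 0" using Lam_zero_beyond_nrows[OF Par_Lam[OF x]] Lam_zero_beyond_nrows[OF y] unfolding M_def by auto
  have "psize x = (\<Sum>j\<in>{1..M}. x j)" by (rule psize_eq_sum) (use zx Lam_at_0[OF Par_Lam[OF x]] in auto)
  also have "\<dots> \<le> (\<Sum>j\<in>{1..M}. y j)" by (rule sum_mono) (use le in auto)
  also have "\<dots> = psize y" by (rule psize_eq_sum[symmetric]) (use zy Lam_at_0[OF y] in auto)
  finally show ?thesis .
qed

section \<open>Distinguished tuples\<close>

locale cyclic_data =
  fixes k :: nat and nup num :: "nat \<Rightarrow> lam"
  assumes k1: "1 \<le> k" and pars: "\<forall>i\<in>{1..k}. nup i \<in> Par \<and> num i \<in> Par"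
begin

definition distinguished :: "ttup \<Rightarrow> bool" where
  "distinguished T \<longleftrightarrow> (\<forall>i\<in>{1..k}. fst T i \<in> SST (nup i) \<and> snd T i \<in> SST (num i)) \<and>
     (\<forall>i. i \<notin> {1..k} \<longrightarrow> fst T i = ztab \<and> snd T i = ztab) \<and>
     (\<forall>j. (\<Sum>i\<in>{1..k}. wtT nup num T i j) = 0)"

definition wt_partial :: "ttup \<Rightarrow> nat \<Rightarrow> lam" where
  "wt_partial T i j = (\<Sum>m\<in>{2..i}. wtT nup num T m j)"

definition lmin_oc :: "ttup \<Rightarrow> nat \<Rightarrow> int" where
  "lmin_oc T x = Max ((\<lambda>m. oc (Splus nup num T m) x) ` {1..k} \<union> (\<lambda>m. oc (Sminus nup num T m) x) ` {1..k})"

lemma lmin_eq_from_omega: "lmin k nup num T = from_omega (lmin_oc T)"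
  unfolding lmin_def lmin_oc_def ..

definition lam_tuple :: "ttup \<Rightarrow> lam \<Rightarrow> nat \<Rightarrow> lam" where
  "lam_tuple T mu i = (if i \<in> {1..k} then (\<lambda>j. lamT k nup num T i j + mu j) else zerop)"

definition alpha_tuple :: "ttup \<Rightarrow> lam \<Rightarrow> nat \<Rightarrow> lam" where
  "alpha_tuple T mu i = (if i \<in> {1..k} then (\<lambda>j. lam_tuple T mu i j - wt (nup i) (fst T i) j) else zerop)"

lemma Splus_eq: "Splus nup num T i j = eps_vec (nup i) (fst T i) j + wt (nup i) (fst T i) j - wt_partial T i j"
  unfolding Splus_def wt_partial_def ..
lemma Sminus_eq: "Sminus nup num T i j = eps_vec (num i) (snd T i) j + wt (nup i) (fst T i) j - wt_partial T i j"
  unfolding Sminus_def wt_partial_def ..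
lemma lamT_eq: "lamT k nup num T i j = lmin k nup num T j + wt_partial T i j"
  unfolding lamT_def wt_partial_def ..

lemma fin_supp_wtT: "fin_supp (wtT nup num T i)"
  unfolding wtT_def using fin_supp_diff[OF fin_supp_wt fin_supp_wt] by simp

lemma fin_supp_wt_partial: "fin_supp (wt_partial T i)"
  unfolding wt_partial_def[abs_def] by (rule fin_supp_sum) (auto intro: fin_supp_wtT)

lemma fin_supp_Splus: "fin_supp (Splus nup num T i)"
proof -
  have "fin_supp (\<lambda>j. eps_vec (nup i) (fst T i) j + wt (nup i) (fst T i) j - wt_partial T i j)"
    by (intro fin_supp_diff fin_supp_add fin_supp_eps_vec fin_supp_wt fin_supp_wt_partial)
  thus ?thesis unfolding Splus_eq[abs_def] .
qed

lemma fin_supp_Sminus: "fin_supp (Sminus nup num T i)"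
proof -
  have "fin_supp (\<lambda>j. eps_vec (num i) (snd T i) j + wt (nup i) (fst T i) j - wt_partial T i j)"
    by (intro fin_supp_diff fin_supp_add fin_supp_eps_vec fin_supp_wt fin_supp_wt_partial)
  thus ?thesis unfolding Sminus_eq[abs_def] .
qed

lemma fin_supp_abs: "fin_supp f \<Longrightarrow> fin_supp (\<lambda>j. \<bar>f j\<bar>)" unfolding fin_supp_def by simp

lemma lmin_oc_bound: "\<exists>M. \<forall>x>M. lmin_oc T x = 0"
proof -
  define G where "G j = (\<Sum>m\<in>{1..k}. \<bar>Splus nup num T m j\<bar> + \<bar>Sminus nup num T m j\<bar>)" for j
  have "fin_supp G" unfolding G_def[abs_def] by (rule fin_supp_sum) (auto intro!: fin_supp_add fin_supp_abs fin_supp_Splus fin_supp_Sminus)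
  then obtain M where M: "\<forall>j>M. G j = 0" using fin_supp_bound by blast
  have z: "Splus nup num T m j = 0 \<and> Sminus nup num T m j = 0" if "m \<in> {1..k}" "j > M" for m j
  proof -
    have "G j = 0" using M that by blast
    hence "\<forall>m\<in>{1..k}. \<bar>Splus nup num T m j\<bar> + \<bar>Sminus nup num T m j\<bar> = 0"
      unfolding G_def by (subst (asm) sum_nonneg_eq_0_iff) auto
    hence "\<bar>Splus nup num T m j\<bar> + \<bar>Sminus nup num T m j\<bar> = 0" using that(1) by blast
    thus ?thesis by linarith
  qed
  have "lmin_oc T x = 0" if x: "x > M" for x
  proof -
    have "(\<lambda>m. oc (Splus nup num T m) x) ` {1..k} \<union> (\<lambda>m. oc (Sminus nup num T m) x) ` {1..k} = {0}"
      using z x k1 unfolding oc_def by force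
    thus ?thesis unfolding lmin_oc_def by simp
  qed
  thus ?thesis by blast
qed

lemma finite_lmin_oc_support: "finite {x. lmin_oc T x \<noteq> 0}"
  using lmin_oc_bound[of T] fin_supp_if_bound unfolding fin_supp_def by blast

lemma oc_lmin: "1 \<le> x \<Longrightarrow> oc (lmin k nup num T) x = lmin_oc T x"
  unfolding lmin_eq_from_omega by (rule oc_from_omega[OF finite_lmin_oc_support])

lemma lmin_Lam: "lmin k nup num T \<in> Lam"
proof -
  obtain M where M: "\<forall>x>M. lmin_oc T x = 0" using lmin_oc_bound by blast
  have "\<forall>j>Suc M. lmin k nup num T j = 0" unfolding lmin_eq_from_omega
    using from_omega_zero_beyond[of "Suc M" "lmin_oc T"] M by auto
  hence "fin_supp (lmin k nup num T)" by (rule fin_supp_if_bound)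
  thus ?thesis unfolding Lam_iff_fin_supp lmin_eq_from_omega by simp
qed

lemma oc_S_le_lmin_oc: "m \<in> {1..k} \<Longrightarrow> oc (Splus nup num T m) x \<le> lmin_oc T x \<and> oc (Sminus nup num T m) x \<le> lmin_oc T x"
  unfolding lmin_oc_def by (intro conjI Max_ge) auto

lemma lmin_oc_le: "(\<forall>m\<in>{1..k}. oc (Splus nup num T m) x \<le> B \<and> oc (Sminus nup num T m) x \<le> B) \<Longrightarrow> lmin_oc T x \<le> B"
  unfolding lmin_oc_def using k1 by (intro Max.boundedI) auto

lemma uCLR_mem: "T \<in> uCLR k l a nup num \<longleftrightarrow>
   (\<forall>i\<in>{1..k}. fst T i \<in> CLR (l i) (a i) (nup i) \<and> snd T i \<in> CLR (l (prev k i)) (a i) (num i)) \<and>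
   (\<forall>i. i \<notin> {1..k} \<longrightarrow> fst T i = ztab \<and> snd T i = ztab)"
  by (cases T) (simp add: uCLR_def)

lemma wt_partial_Suc: "1 \<le> i \<Longrightarrow> wt_partial T (Suc i) j = wt_partial T i j + wtT nup num T (Suc i) j"
proof -
  assume i: "1 \<le> i"
  have "{2..Suc i} = insert (Suc i) {2..i}" using i by auto
  thus ?thesis unfolding wt_partial_def by simp
qed

lemma sum_wtT_eq: "(\<Sum>i\<in>{1..k}. wtT nup num T i j) = wtT nup num T 1 j + wt_partial T k j"
proof -
  have "{1..k} = insert 1 {2..k}" using k1 by auto
  thus ?thesis unfolding wt_partial_def by simp
qed

lemma prev_Suc: "prev k (Suc i) = i" if "1 \<le> i" using that unfolding prev_def by simp
lemma prev_1: "prev k 1 = k" unfolding prev_def by simp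

lemma uCLR_CLR:
  assumes "T \<in> uCLR k l a nup num" and "i \<in> {1..k}"
  shows "fst T i \<in> SST (nup i)" "le_lam (eps_vec (nup i) (fst T i)) (a i)"
    "a i j + wt (nup i) (fst T i) j = l i j"
    "snd T i \<in> SST (num i)" "le_lam (eps_vec (num i) (snd T i)) (a i)"
    "a i j + wt (num i) (snd T i) j = l (prev k i) j"
  using assms unfolding uCLR_mem CLR_def by auto

lemma uCLR_wtT:
  "T \<in> uCLR k l a nup num \<Longrightarrow> i \<in> {1..k} \<Longrightarrow> wtT nup num T i j = l i j - l (prev k i) j"
  using uCLR_CLR(3,6)[of T l a i j] unfolding wtT_def by (metis add_diff_cancel_left)

lemma uCLR_lam_eq:
  assumes T: "T \<in> uCLR k l a nup num" and i: "i \<in> {1..k}"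
  shows "l i j = l 1 j + wt_partial T i j"
  using i
proof (induction i)
  case (Suc i)
  show ?case
  proof (cases "i = 0")
    case True thus ?thesis by (simp add: wt_partial_def)
  next
    case False
    hence i1: "1 \<le> i" and ik: "i \<in> {1..k}" using Suc.prems by auto
    show ?thesis using uCLR_wtT[OF T Suc.prems, of j] prev_Suc[OF i1] Suc.IH[OF ik] wt_partial_Suc[OF i1]
      by simp
  qed
qed simp

lemma uCLR_distinguished:
  assumes T: "T \<in> uCLR k l a nup num"
  shows "distinguished T"
proof -
  have ends: "k \<in> {1..k}" "1 \<in> {1..k}" using k1 by auto
  have "(\<Sum>i\<in>{1..k}. wtT nup num T i j) = 0" for j
    unfolding sum_wtT_eq using uCLR_wtT[OF T ends(2), of j] uCLR_lam_eq[OF T ends(1), of j] prev_1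
    by simp
  thus ?thesis unfolding distinguished_def using T uCLR_mem uCLR_CLR(1,4)[OF T] by blast
qed

lemma uCLR_oc_S_le:
  assumes T: "T \<in> uCLR k l a nup num" and i: "i \<in> {1..k}" and x: "1 \<le> x"
  shows "oc (Splus nup num T i) x \<le> oc (l 1) x \<and> oc (Sminus nup num T i) x \<le> oc (l 1) x"
proof -
  have "oc (eps_vec (nup i) (fst T i)) x \<le> oc (a i) x" "oc (eps_vec (num i) (snd T i)) x \<le> oc (a i) x"
    using uCLR_CLR(2,5)[OF T i] x unfolding le_lam_def by auto
  moreover have "a i y = l 1 y + wt_partial T i y - wt (nup i) (fst T i) y" for y
    using uCLR_CLR(3)[OF T i, of y] uCLR_lam_eq[OF T i, of y] by simp
  ultimately show ?thesis unfolding oc_def Splus_eq Sminus_eq by simp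
qed

lemma distinguished_SST: "distinguished T \<Longrightarrow> i \<in> {1..k} \<Longrightarrow> fst T i \<in> SST (nup i) \<and> snd T i \<in> SST (num i)"
  unfolding distinguished_def by blast

lemma distinguished_wt_at_0: "distinguished T \<Longrightarrow> i \<in> {1..k} \<Longrightarrow> wt (nup i) (fst T i) 0 = 0 \<and> wt (num i) (snd T i) 0 = 0"
  using distinguished_SST wt_at_0 pars by blast

lemma wt_partial_at_0: "distinguished T \<Longrightarrow> i \<le> k \<Longrightarrow> wt_partial T i 0 = 0"
  unfolding wt_partial_def wtT_def using distinguished_wt_at_0 by (intro sum.neutral) auto

lemma lamT_Lam: "distinguished T \<Longrightarrow> i \<in> {1..k} \<Longrightarrow> lamT k nup num T i \<in> Lam"
proof -
  assume g: "distinguished T" and i: "i \<in> {1..k}"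
  have l: "lmin k nup num T \<in> Lam" by (rule lmin_Lam)
  have "fin_supp (\<lambda>j. lmin k nup num T j + wt_partial T i j)" using l fin_supp_wt_partial unfolding Lam_iff_fin_supp by (intro fin_supp_add) auto
  moreover have "lmin k nup num T 0 + wt_partial T i 0 = 0" using l wt_partial_at_0[OF g] i unfolding Lam_iff_fin_supp by auto
  ultimately show ?thesis unfolding Lam_iff_fin_supp lamT_eq by simp
qed

lemma lam_tuple_eq: "i \<in> {1..k} \<Longrightarrow> lam_tuple T mu i j = lmin k nup num T j + wt_partial T i j + mu j"
  unfolding lam_tuple_def lamT_eq by simp

lemma alpha_tuple_eq: "i \<in> {1..k} \<Longrightarrow> alpha_tuple T mu i j = lam_tuple T mu i j - wt (nup i) (fst T i) j"
  unfolding alpha_tuple_def by simp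

lemma oc_eps_vec_le_alpha_tuple:
  assumes mu: "mu \<in> Par" and i: "i \<in> {1..k}" and x: "1 \<le> x"
  shows "oc (eps_vec (nup i) (fst T i)) x \<le> oc (alpha_tuple T mu i) x"
    and "oc (eps_vec (num i) (snd T i)) x \<le> oc (alpha_tuple T mu i) x"
proof -
  have "oc (alpha_tuple T mu i) x
      = lmin_oc T x + oc (wt_partial T i) x + oc mu x - oc (wt (nup i) (fst T i)) x"
    using oc_lmin[OF x, of T] unfolding oc_def alpha_tuple_eq[OF i] lam_tuple_eq[OF i] by simp
  moreover have "0 \<le> oc mu x" using mu x unfolding Par_def by auto
  moreover have "oc (Splus nup num T i) x \<le> lmin_oc T x" "oc (Sminus nup num T i) x \<le> lmin_oc T x"
    using oc_S_le_lmin_oc[OF i] by auto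
  ultimately show "oc (eps_vec (nup i) (fst T i)) x \<le> oc (alpha_tuple T mu i) x"
    and "oc (eps_vec (num i) (snd T i)) x \<le> oc (alpha_tuple T mu i) x"
    unfolding oc_def Splus_eq Sminus_eq by linarith+
qed

lemma alpha_tuple_Par:
  assumes g: "distinguished T" and mu: "mu \<in> Par" and i: "i \<in> {1..k}"
  shows "alpha_tuple T mu i \<in> Par"
proof -
  have "alpha_tuple T mu i = (\<lambda>j. lmin k nup num T j + wt_partial T i j + mu j - wt (nup i) (fst T i) j)"
    by (simp add: fun_eq_iff alpha_tuple_eq[OF i] lam_tuple_eq[OF i])
  moreover have "lmin k nup num T \<in> Lam" "mu \<in> Lam" using lmin_Lam Par_Lam[OF mu] .
  ultimately have "alpha_tuple T mu i \<in> Lam"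
    using wt_partial_at_0[OF g] distinguished_wt_at_0[OF g i] i unfolding Lam_iff_fin_supp
    by (auto intro!: fin_supp_diff fin_supp_add fin_supp_wt_partial fin_supp_wt)
  moreover have "\<forall>x\<ge>1. 0 \<le> oc (alpha_tuple T mu i) x"
    using oc_eps_vec_le_alpha_tuple(1)[OF mu i, where T = T] oc_eps_vec by (metis of_nat_0_le_iff order_trans)
  ultimately show ?thesis unfolding Par_def by auto
qed

lemma lam_tuple_Par:
  assumes g: "distinguished T" and mu: "mu \<in> Par" and i: "i \<in> {1..k}"
  shows "lam_tuple T mu i \<in> Par"
proof -
  have e: "lam_tuple T mu i = (\<lambda>j. alpha_tuple T mu i j + wt (nup i) (fst T i) j)"
    using alpha_tuple_eq[OF i] by auto
  have A: "alpha_tuple T mu i \<in> Par" using alpha_tuple_Par[OF g mu i] .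
  have "lam_tuple T mu i \<in> Lam"
    using Par_Lam[OF A] distinguished_wt_at_0[OF g i] unfolding e Lam_iff_fin_supp
    by (auto intro!: fin_supp_add fin_supp_wt)
  moreover have "0 \<le> oc (lam_tuple T mu i) x" if x: "1 \<le> x" for x
    using oc_eps_vec_le_alpha_tuple(1)[OF mu i x, where T = T] oc_eps_vec[OF x, of "nup i" "fst T i"]
      epsi_plus_oc_wt_nonneg[OF x, of "nup i" "fst T i"]
    unfolding e oc_def by linarith
  ultimately show ?thesis unfolding Par_def by auto
qed

text \<open>This is where \<open>\<Sum>\<^sub>j wt(T\<^sub>j) = 0\<close> enters: it closes the cycle at \<open>i = 1\<close>, \<open>prev k 1 = k\<close>.\<close>

lemma alpha_plus_wt_minus_eq_lam_prev:
  assumes g: "distinguished T" and i: "i \<in> {1..k}"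
  shows "alpha_tuple T mu i j + wt (num i) (snd T i) j = lam_tuple T mu (prev k i) j"
proof -
  have base: "alpha_tuple T mu i j + wt (num i) (snd T i) j = lam_tuple T mu i j - wtT nup num T i j"
    using alpha_tuple_eq[OF i] unfolding wtT_def by simp
  show ?thesis
  proof (cases "i = 1")
    case True
    have "k \<in> {1..k}" using k1 by simp
    moreover have "wtT nup num T 1 j + wt_partial T k j = 0"
      using g sum_wtT_eq unfolding distinguished_def by metis
    ultimately show ?thesis using base True lam_tuple_eq[OF i] lam_tuple_eq prev_1
      by (simp add: wt_partial_def)
  next
    case False
    hence i1: "1 \<le> i - 1" and ip: "i - 1 \<in> {1..k}" and si: "Suc (i - 1) = i" using i by auto
    have "wt_partial T i j = wt_partial T (i - 1) j + wtT nup num T i j"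
      using wt_partial_Suc[OF i1, of T j] si by simp
    moreover have "prev k i = i - 1" using False unfolding prev_def by simp
    ultimately show ?thesis using base lam_tuple_eq[OF i] lam_tuple_eq[OF ip] by simp
  qed
qed

lemma distinguished_uCLR:
  assumes g: "distinguished T" and mu: "mu \<in> Par"
  shows "lam_tuple T mu \<in> Ptup k" "alpha_tuple T mu \<in> Ptup k"
    "T \<in> uCLR k (lam_tuple T mu) (alpha_tuple T mu) nup num"
proof -
  show "lam_tuple T mu \<in> Ptup k" unfolding Ptup_def using lam_tuple_Par[OF g mu] by (auto simp: lam_tuple_def)
  show "alpha_tuple T mu \<in> Ptup k" unfolding Ptup_def using alpha_tuple_Par[OF g mu] by (auto simp: alpha_tuple_def)
  show "T \<in> uCLR k (lam_tuple T mu) (alpha_tuple T mu) nup num" unfolding uCLR_mem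
  proof (intro conjI ballI allI impI)
    fix i assume i: "i \<in> {1..k}"
    have "le_lam (eps_vec (nup i) (fst T i)) (alpha_tuple T mu i)"
      "le_lam (eps_vec (num i) (snd T i)) (alpha_tuple T mu i)"
      unfolding le_lam_def using oc_eps_vec_le_alpha_tuple[OF mu i, where T = T] by auto
    thus "fst T i \<in> CLR (lam_tuple T mu i) (alpha_tuple T mu i) (nup i)"
      "snd T i \<in> CLR (lam_tuple T mu (prev k i)) (alpha_tuple T mu i) (num i)"
      unfolding CLR_def using distinguished_SST[OF g i] alpha_tuple_eq[OF i]
        alpha_plus_wt_minus_eq_lam_prev[OF g i] by auto
  next
    fix i assume "i \<notin> {1..k}"
    thus "fst T i = ztab" "snd T i = ztab" using g unfolding distinguished_def by auto
  qed
qed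

lemma uCLR_recover_tuples:
  assumes l: "l \<in> Ptup k" and a: "a \<in> Ptup k" and T: "T \<in> uCLR k l a nup num"
  defines "mu \<equiv> (\<lambda>j. l 1 j - lmin k nup num T j)"
  shows "mu \<in> Par" "lam_tuple T mu = l" "alpha_tuple T mu = a"
proof -
  have l1: "l 1 \<in> Par" using l k1 unfolding Ptup_def by auto
  have "mu \<in> Lam" unfolding mu_def using Par_Lam[OF l1] lmin_Lam[of T] unfolding Lam_iff_fin_supp
    by (auto intro: fin_supp_diff)
  moreover have "0 \<le> oc mu x" if x: "1 \<le> x" for x
  proof -
    have "lmin_oc T x \<le> oc (l 1) x" using uCLR_oc_S_le[OF T _ x] by (intro lmin_oc_le) auto
    thus ?thesis unfolding mu_def using oc_lmin[OF x, of T] unfolding oc_def by simp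
  qed
  ultimately show "mu \<in> Par" unfolding Par_def by blast
  have "lam_tuple T mu i = l i \<and> alpha_tuple T mu i = a i" for i
  proof (cases "i \<in> {1..k}")
    case True
    thus ?thesis using uCLR_lam_eq[OF T True] uCLR_CLR(3)[OF T True]
      unfolding alpha_tuple_def lam_tuple_def lamT_eq mu_def by (auto simp: fun_eq_iff algebra_simps)
  next
    case False
    thus ?thesis using l a unfolding Ptup_def lam_tuple_def alpha_tuple_def by auto
  qed
  thus "lam_tuple T mu = l" "alpha_tuple T mu = a" by auto
qed

lemma lam_tuple_1_minus_lmin: "lam_tuple T mu 1 j - lmin k nup num T j = mu j"
  using k1 unfolding lam_tuple_def lamT_eq by (simp add: wt_partial_def)

lemma sum_psize_lam_tuple:
  assumes g: "distinguished T" and mu: "mu \<in> Par"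
  shows "(\<Sum>i\<in>{1..k}. psize (lam_tuple T mu i)) = tot_size k nup num T + int k * psize mu"
proof -
  have "psize (lam_tuple T mu i) = psize (lamT k nup num T i) + psize mu" if i: "i \<in> {1..k}" for i
  proof -
    have "lam_tuple T mu i = (\<lambda>j. lamT k nup num T i j + mu j)" using i unfolding lam_tuple_def by simp
    thus ?thesis using psize_add[OF lamT_Lam[OF g i] Par_Lam[OF mu]] by simp
  qed
  hence "(\<Sum>i\<in>{1..k}. psize (lam_tuple T mu i)) = (\<Sum>i\<in>{1..k}. psize (lamT k nup num T i) + psize mu)"
    by (rule sum.cong[OF refl])
  also have "\<dots> = tot_size k nup num T + int k * psize mu" unfolding tot_size_def by (simp add: sum.distrib)
  finally show ?thesis .
qed

lemma Dset_iff_distinguished: "T \<in> Dset k nup num \<longleftrightarrow> distinguished T"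
proof
  assume "T \<in> Dset k nup num"
  then obtain l a where "l \<in> Ptup k" "a \<in> Ptup k" "T \<in> uCLR k l a nup num" unfolding Dset_def by blast
  thus "distinguished T" using uCLR_distinguished by blast
next
  assume g: "distinguished T"
  show "T \<in> Dset k nup num" unfolding Dset_def using distinguished_uCLR[OF g zerop_Par] by blast
qed

lemma tot_size_nonneg: "distinguished T \<Longrightarrow> 0 \<le> tot_size k nup num T"
proof -
  assume g: "distinguished T"
  have "0 \<le> psize (lam_tuple T zerop i)" if "i \<in> {1..k}" for i
    using distinguished_uCLR(1)[OF g zerop_Par] that psize_nonneg unfolding Ptup_def by blast
  hence "0 \<le> (\<Sum>i\<in>{1..k}. psize (lam_tuple T zerop i))" by (rule sum_nonneg)
  moreover have "psize zerop = 0" by (simp add: psize_def zerop_def)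
  ultimately show ?thesis using sum_psize_lam_tuple[OF g zerop_Par] by simp
qed

lemma Ptup_Par: "l \<in> Ptup k \<Longrightarrow> i \<in> {1..k} \<Longrightarrow> l i \<in> Par" unfolding Ptup_def by blast

lemma prev_in: "i \<in> {1..k} \<Longrightarrow> prev k i \<in> {1..k}" unfolding prev_def by auto

lemma bij_betw_uCLR_PiE:
  "bij_betw (\<lambda>T. restrict (\<lambda>i. (fst T i, snd T i)) {1..k}) (uCLR k l a nup num)
     (\<Pi>\<^sub>E i\<in>{1..k}. CLR (l i) (a i) (nup i) \<times> CLR (l (prev k i)) (a i) (num i))"
proof (rule bij_betw_byWitness[where f' = "\<lambda>h. ((\<lambda>i. if i \<in> {1..k} then fst (h i) else ztab),
                                                 (\<lambda>i. if i \<in> {1..k} then snd (h i) else ztab))"])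
  show "\<forall>T\<in>uCLR k l a nup num. ((\<lambda>i. if i \<in> {1..k} then fst (restrict (\<lambda>i. (fst T i, snd T i)) {1..k} i) else ztab),
      (\<lambda>i. if i \<in> {1..k} then snd (restrict (\<lambda>i. (fst T i, snd T i)) {1..k} i) else ztab)) = T"
    by (auto simp: uCLR_mem prod_eq_iff fun_eq_iff)
qed (auto simp: uCLR_mem PiE_iff extensional_def fun_eq_iff mem_Times_iff)

lemma finite_card_uCLR:
  assumes l: "l \<in> Ptup k" and a: "a \<in> Ptup k"
  shows "finite (uCLR k l a nup num)" "int (card (uCLR k l a nup num)) = lrprod k nup num a l"
proof -
  have fin: "finite (CLR (l i) (a i) (nup i) \<times> CLR (l (prev k i)) (a i) (num i))" if i: "i \<in> {1..k}" for i
    using finite_CLR Ptup_Par[OF l i] Ptup_Par[OF a i] Ptup_Par[OF l prev_in[OF i]] pars i by blast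
  show "finite (uCLR k l a nup num)" using bij_betw_finite[OF bij_betw_uCLR_PiE] fin by (auto intro: finite_PiE)
  have "card (uCLR k l a nup num) = card (\<Pi>\<^sub>E i\<in>{1..k}. CLR (l i) (a i) (nup i) \<times> CLR (l (prev k i)) (a i) (num i))"
    by (rule bij_betw_same_card[OF bij_betw_uCLR_PiE])
  also have "\<dots> = (\<Prod>i\<in>{1..k}. card (CLR (l i) (a i) (nup i)) * card (CLR (l (prev k i)) (a i) (num i)))"
    by (simp add: card_PiE card_cartesian_product)
  also have "\<dots> = (\<Prod>i\<in>{1..k}. lrc (l i) (a i) (nup i) * lrc (l (prev k i)) (a i) (num i))"
    by (rule prod.cong[OF refl]) (use card_CLR Ptup_Par[OF l] Ptup_Par[OF a] prev_in pars in \<open>metis\<close>)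
  finally show "int (card (uCLR k l a nup num)) = lrprod k nup num a l" unfolding lrprod_def by simp
qed

definition lr_index :: "nat \<Rightarrow> ((nat \<Rightarrow> lam) \<times> (nat \<Rightarrow> lam)) set" where
  "lr_index n = {(a, l). a \<in> Ptup k \<and> l \<in> Ptup k \<and> (\<Sum>i\<in>{1..k}. psize (l i)) = int n \<and> lrprod k nup num a l \<noteq> 0}"

definition lr_triples :: "nat \<Rightarrow> (((nat \<Rightarrow> lam) \<times> (nat \<Rightarrow> lam)) \<times> ttup) set" where
  "lr_triples n = Sigma (lr_index n) (\<lambda>(a, l). uCLR k l a nup num)"

definition dist_pairs :: "nat \<Rightarrow> (ttup \<times> lam) set" where
  "dist_pairs n = {(T, mu). distinguished T \<and> mu \<in> Par \<and> tot_size k nup num T + int k * psize mu = int n}"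

definition dist_of_size :: "nat \<Rightarrow> ttup set" where
  "dist_of_size n = {T \<in> Dset k nup num. tot_size k nup num T = int n}"

definition scaled_partitions :: "nat \<Rightarrow> lam set" where
  "scaled_partitions t = {mu \<in> Par. int k * psize mu = int t}"

definition bounded_tuples :: "nat \<Rightarrow> (nat \<Rightarrow> lam) set" where
  "bounded_tuples n = {f \<in> Ptup k. \<forall>i\<in>{1..k}. psize (f i) \<le> int n}"

lemma finite_bounded_tuples: "finite (bounded_tuples n)"
proof (rule finite_subset)
  let ?g = "\<lambda>g :: nat \<Rightarrow> lam. \<lambda>i. if i \<in> {1..k} then g i else zerop"
  show "bounded_tuples n \<subseteq> ?g ` (\<Pi>\<^sub>E i\<in>{1..k}. {x \<in> Par. psize x \<le> int n})"
  proof
    fix f assume f: "f \<in> bounded_tuples n"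
    have "f = ?g (restrict f {1..k})" using f unfolding bounded_tuples_def Ptup_def by (auto simp: fun_eq_iff)
    moreover have "restrict f {1..k} \<in> (\<Pi>\<^sub>E i\<in>{1..k}. {x \<in> Par. psize x \<le> int n})"
      using f unfolding bounded_tuples_def Ptup_def by auto
    ultimately show "f \<in> ?g ` (\<Pi>\<^sub>E i\<in>{1..k}. {x \<in> Par. psize x \<le> int n})" by blast
  qed
  show "finite (?g ` (\<Pi>\<^sub>E i\<in>{1..k}. {x \<in> Par. psize x \<le> int n}))"
    by (intro finite_imageI finite_PiE finite_Par_psize_le) auto
qed

lemma finite_lr_index: "finite (lr_index n)"
proof (rule finite_subset[OF _ finite_cartesian_product[OF finite_bounded_tuples finite_bounded_tuples]])
  show "lr_index n \<subseteq> bounded_tuples n \<times> bounded_tuples n"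
  proof
    fix x assume x: "x \<in> lr_index n"
    then obtain a l where xe: "x = (a, l)" and a: "a \<in> Ptup k" and l: "l \<in> Ptup k"
      and s: "(\<Sum>i\<in>{1..k}. psize (l i)) = int n" and p: "lrprod k nup num a l \<noteq> 0" unfolding lr_index_def by blast
    have lb: "psize (l i) \<le> int n" if i: "i \<in> {1..k}" for i
    proof -
      have "psize (l i) \<le> (\<Sum>i\<in>{1..k}. psize (l i))"
        by (rule member_le_sum) (use i psize_nonneg Ptup_Par[OF l] in auto)
      thus ?thesis using s by simp
    qed
    have ab: "psize (a i) \<le> int n" if i: "i \<in> {1..k}" for i
    proof -
      have "lrc (l i) (a i) (nup i) \<noteq> 0" using p i unfolding lrprod_def by auto
      hence "\<forall>j. a i j \<le> l i j" unfolding lrc_def by (meson)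
      hence "psize (a i) \<le> psize (l i)" using psize_mono Ptup_Par[OF a i] Ptup_Par[OF l i] Par_Lam by blast
      thus ?thesis using lb[OF i] by simp
    qed
    show "x \<in> bounded_tuples n \<times> bounded_tuples n" unfolding xe bounded_tuples_def using a l lb ab by blast
  qed
qed

lemma finite_lr_triples: "finite (lr_triples n)"
  unfolding lr_triples_def by (rule finite_SigmaI[OF finite_lr_index]) (auto simp: lr_index_def intro: finite_card_uCLR(1))

lemma sum_lr_index: "(\<Sum>(a, l)\<in>lr_index n. lrprod k nup num a l) = int (card (lr_triples n))"
proof -
  have "(\<Sum>(a, l)\<in>lr_index n. lrprod k nup num a l) = (\<Sum>(a, l)\<in>lr_index n. int (card (uCLR k l a nup num)))"
    by (rule sum.cong[OF refl]) (auto simp: lr_index_def finite_card_uCLR(2))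
  also have "\<dots> = int (\<Sum>(a, l)\<in>lr_index n. card (uCLR k l a nup num))" by (simp add: case_prod_unfold)
  also have "(\<Sum>(a, l)\<in>lr_index n. card (uCLR k l a nup num)) = card (lr_triples n)"
  proof -
    have "card (lr_triples n) = (\<Sum>x\<in>lr_index n. card ((\<lambda>(a, l). uCLR k l a nup num) x))"
      unfolding lr_triples_def by (rule card_SigmaI[OF finite_lr_index]) (auto simp: lr_index_def intro: finite_card_uCLR(1))
    thus ?thesis by (simp add: case_prod_unfold)
  qed
  finally show ?thesis .
qed

lemma lr_triple_of_dist_pair:
  assumes "(T, mu) \<in> dist_pairs n"
  shows "((alpha_tuple T mu, lam_tuple T mu), T) \<in> lr_triples n"
proof -
  have g: "distinguished T" and mu: "mu \<in> Par" and ts: "tot_size k nup num T + int k * psize mu = int n"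
    using assms unfolding dist_pairs_def by auto
  note P = distinguished_uCLR[OF g mu]
  have "card (uCLR k (lam_tuple T mu) (alpha_tuple T mu) nup num) \<noteq> 0"
    using finite_card_uCLR(1)[OF P(1,2)] P(3) by auto
  hence "lrprod k nup num (alpha_tuple T mu) (lam_tuple T mu) \<noteq> 0"
    using finite_card_uCLR(2)[OF P(1,2)] by simp
  moreover have "(\<Sum>i\<in>{1..k}. psize (lam_tuple T mu i)) = int n" using sum_psize_lam_tuple[OF g mu] ts by simp
  ultimately show ?thesis unfolding lr_triples_def lr_index_def using P by blast
qed

lemma dist_pair_of_lr_triple:
  assumes "((a, l), T) \<in> lr_triples n"
  shows "(T, \<lambda>j. l 1 j - lmin k nup num T j) \<in> dist_pairs n"
proof -
  have a: "a \<in> Ptup k" and l: "l \<in> Ptup k" and s: "(\<Sum>i\<in>{1..k}. psize (l i)) = int n"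
    and T: "T \<in> uCLR k l a nup num"
    using assms unfolding lr_triples_def lr_index_def by auto
  note mu = uCLR_recover_tuples[OF l a T]
  have g: "distinguished T" using uCLR_distinguished[OF T] .
  show ?thesis unfolding dist_pairs_def using sum_psize_lam_tuple[OF g mu(1)] mu g s by simp
qed

lemma bij_betw_dist_pairs_lr_triples:
  "bij_betw (\<lambda>(T, mu). ((alpha_tuple T mu, lam_tuple T mu), T)) (dist_pairs n) (lr_triples n)"
proof (rule bij_betw_byWitness[where f' = "\<lambda>((a, l), T). (T, \<lambda>j. l 1 j - lmin k nup num T j)"])
  show "\<forall>x\<in>dist_pairs n. (\<lambda>((a, l), T). (T, \<lambda>j. l 1 j - lmin k nup num T j))
      ((\<lambda>(T, mu). ((alpha_tuple T mu, lam_tuple T mu), T)) x) = x"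
    using lam_tuple_1_minus_lmin by auto
  show "\<forall>y\<in>lr_triples n. (\<lambda>(T, mu). ((alpha_tuple T mu, lam_tuple T mu), T))
      ((\<lambda>((a, l), T). (T, \<lambda>j. l 1 j - lmin k nup num T j)) y) = y"
    using uCLR_recover_tuples(2,3) unfolding lr_triples_def lr_index_def by auto
  show "(\<lambda>(T, mu). ((alpha_tuple T mu, lam_tuple T mu), T)) ` dist_pairs n \<subseteq> lr_triples n"
    using lr_triple_of_dist_pair by auto
  show "(\<lambda>((a, l), T). (T, \<lambda>j. l 1 j - lmin k nup num T j)) ` lr_triples n \<subseteq> dist_pairs n"
    using dist_pair_of_lr_triple by auto
qed

lemma finite_dist_pairs: "finite (dist_pairs n)" using bij_betw_finite[OF bij_betw_dist_pairs_lr_triples] finite_lr_triples by blast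
lemma card_dist_pairs: "card (dist_pairs n) = card (lr_triples n)" using bij_betw_same_card[OF bij_betw_dist_pairs_lr_triples] .

lemma dist_pairs_decomp: "dist_pairs n = (\<Union>m\<in>{0..n}. dist_of_size m \<times> scaled_partitions (n - m))"
proof
  show "dist_pairs n \<subseteq> (\<Union>m\<in>{0..n}. dist_of_size m \<times> scaled_partitions (n - m))"
  proof
    fix x assume x: "x \<in> dist_pairs n"
    obtain T mu where xe: "x = (T, mu)" by (cases x)
    have g: "distinguished T" and mu: "mu \<in> Par" and ts: "tot_size k nup num T + int k * psize mu = int n"
      using x xe unfolding dist_pairs_def by auto
    have t0: "0 \<le> tot_size k nup num T" using tot_size_nonneg[OF g] .
    have p0: "0 \<le> int k * psize mu" using psize_nonneg[OF mu] by simp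
    define m where "m = nat (tot_size k nup num T)"
    have mt: "int m = tot_size k nup num T" unfolding m_def using t0 by simp
    have mn: "m \<le> n" using mt ts p0 by linarith
    have "T \<in> dist_of_size m" unfolding dist_of_size_def using Dset_iff_distinguished g mt by simp
    moreover have "mu \<in> scaled_partitions (n - m)" unfolding scaled_partitions_def using mu ts mt mn by (simp add: of_nat_diff)
    ultimately show "x \<in> (\<Union>m\<in>{0..n}. dist_of_size m \<times> scaled_partitions (n - m))" using xe mn by auto
  qed
  show "(\<Union>m\<in>{0..n}. dist_of_size m \<times> scaled_partitions (n - m)) \<subseteq> dist_pairs n"
  proof
    fix x assume "x \<in> (\<Union>m\<in>{0..n}. dist_of_size m \<times> scaled_partitions (n - m))"
    then obtain m T mu where m: "m \<le> n" and xe: "x = (T, mu)" and T: "T \<in> dist_of_size m" and mu: "mu \<in> scaled_partitions (n - m)" by auto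
    have "distinguished T" "tot_size k nup num T = int m" using T Dset_iff_distinguished unfolding dist_of_size_def by auto
    moreover have "mu \<in> Par" "int k * psize mu = int (n - m)" using mu unfolding scaled_partitions_def by auto
    ultimately show "x \<in> dist_pairs n" unfolding dist_pairs_def xe using m by (simp add: of_nat_diff)
  qed
qed

lemma finite_dist_of_size: "finite (dist_of_size m)"
proof -
  have "dist_of_size m \<subseteq> fst ` dist_pairs m"
  proof
    fix T assume T: "T \<in> dist_of_size m"
    have "(T, zerop) \<in> dist_pairs m" using T Dset_iff_distinguished zerop_Par unfolding dist_of_size_def dist_pairs_def by (simp add: psize_def zerop_def)
    thus "T \<in> fst ` dist_pairs m" by force
  qed
  thus ?thesis using finite_dist_pairs by (rule finite_subset[OF _ finite_imageI])
qed

lemma finite_scaled_partitions: "finite (scaled_partitions t)"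
proof (rule finite_subset[OF _ finite_Par_psize_le[of t]])
  show "scaled_partitions t \<subseteq> {x \<in> Par. psize x \<le> int t}"
  proof
    fix mu assume "mu \<in> scaled_partitions t"
    hence mu: "mu \<in> Par" "int k * psize mu = int t" unfolding scaled_partitions_def by auto
    have "psize mu \<le> int k * psize mu" using psize_nonneg[OF mu(1)] k1 by (simp add: mult_le_cancel_right1)
    thus "mu \<in> {x \<in> Par. psize x \<le> int t}" using mu by simp
  qed
qed

lemma card_dist_pairs_sum: "card (dist_pairs n) = (\<Sum>m\<in>{0..n}. card (dist_of_size m) * card (scaled_partitions (n - m)))"
proof -
  have "card (dist_pairs n) = (\<Sum>m\<in>{0..n}. card (dist_of_size m \<times> scaled_partitions (n - m)))"
    unfolding dist_pairs_decomp
  proof (rule card_UN_disjoint)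
    show "finite {0..n}" by simp
    show "\<forall>m\<in>{0..n}. finite (dist_of_size m \<times> scaled_partitions (n - m))" using finite_dist_of_size finite_scaled_partitions by blast
    show "\<forall>m\<in>{0..n}. \<forall>m'\<in>{0..n}. m \<noteq> m' \<longrightarrow> dist_of_size m \<times> scaled_partitions (n - m) \<inter> dist_of_size m' \<times> scaled_partitions (n - m') = {}"
      unfolding dist_of_size_def by auto
  qed
  thus ?thesis by (simp add: card_cartesian_product)
qed

lemma card_scaled_partitions: "int (card (scaled_partitions t)) = fps_nth (gf_partitions k) t"
proof (cases "k dvd t")
  case True
  then obtain s where t: "t = k * s" by blast
  have "scaled_partitions t = {x \<in> Par. psize x = int (t div k)}"
  proof -
    have "int k * p = int t \<longleftrightarrow> p = int s" for p using t k1 by (auto simp: algebra_simps)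
    moreover have "t div k = s" using t k1 by simp
    ultimately show ?thesis unfolding scaled_partitions_def by simp
  qed
  thus ?thesis unfolding gf_partitions_def using True by simp
next
  case False
  have "scaled_partitions t = {}"
  proof (rule ccontr)
    assume "scaled_partitions t \<noteq> {}"
    then obtain mu where mu: "mu \<in> Par" "int k * psize mu = int t" unfolding scaled_partitions_def by auto
    have "t = k * nat (psize mu)" using mu psize_nonneg[OF mu(1)] by (metis nat_int nat_mult_distrib of_nat_0_le_iff nat_0_le)
    thus False using False by simp
  qed
  thus ?thesis unfolding gf_partitions_def using False by simp
qed

lemma lr_series_eq:
  "Abs_fps (\<lambda>n. \<Sum>(a, l)\<in>{(a, l). a \<in> Ptup k \<and> l \<in> Ptup k \<and> (\<Sum>i\<in>{1..k}. psize (l i)) = int n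
                       \<and> lrprod k nup num a l \<noteq> 0}. lrprod k nup num a l)
   = Abs_fps (\<lambda>n. int (card (dist_of_size n))) * gf_partitions k"
proof (rule fps_ext)
  fix n
  have "(\<Sum>(a, l)\<in>lr_index n. lrprod k nup num a l) = int (card (dist_pairs n))"
    using sum_lr_index card_dist_pairs by simp
  also have "\<dots> = (\<Sum>m\<in>{0..n}. int (card (dist_of_size m)) * fps_nth (gf_partitions k) (n - m))"
    using card_dist_pairs_sum card_scaled_partitions by simp
  finally show "fps_nth (Abs_fps (\<lambda>n. \<Sum>(a, l)\<in>{(a, l). a \<in> Ptup k \<and> l \<in> Ptup k
        \<and> (\<Sum>i\<in>{1..k}. psize (l i)) = int n \<and> lrprod k nup num a l \<noteq> 0}. lrprod k nup num a l)) n
      = fps_nth (Abs_fps (\<lambda>n. int (card (dist_of_size n))) * gf_partitions k) n"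
    unfolding lr_index_def fps_mult_nth by simp
qed

end

theorem mainTheorem12:
  fixes k :: nat and nup num :: "nat \<Rightarrow> lam"
  assumes "k \<ge> 1"
    and "\<forall>i\<in>{1..k}. nup i \<in> Par \<and> num i \<in> Par"
  shows "(\<forall>n. finite {T \<in> Dset k nup num. tot_size k nup num T = int n}) \<and>
         m_inf k nup num =
           Abs_fps (\<lambda>n. int (card {T \<in> Dset k nup num. tot_size k nup num T = int n}))"
proof -
  interpret cyclic_data k nup num using assms by unfold_locales auto
  have "m_inf k nup num = euler_factor k * (Abs_fps (\<lambda>n. int (card (dist_of_size n))) * gf_partitions k)"
    unfolding m_inf_def lr_series_eq ..
  also have "\<dots> = Abs_fps (\<lambda>n. int (card (dist_of_size n)))"
    using euler_factor_gf_partitions[OF k1] by (simp add: algebra_simps)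
  finally show ?thesis using finite_dist_of_size unfolding dist_of_size_def by blast
qed

end
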